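(* Let $p$ be a prime and let $\mathcal{C}$ be a nontrivial finite Abelian $p$-group of length $N$. (1) If $\mathcal{C}\cong\mathbb{Z}_{p^N}$, then $\mathcal{C}$ has a finitary $\Pi_1$ Scott sentence within the class of Abelian $p$-groups of length $N$; and for any $X\subseteq\omega$ and any set $S$ that is $\Pi^0_1(X)$, there is a uniformly $X$-computable sequence $(\mathcal{C}_n)_{n\in\omega}$ of Abelian $p$-groups of length $N$ such that $\mathcal{C}_n\cong\mathcal{C}$ iff $n\in S$. (2) If $\mathcal{C}\not\cong\mathbb{Z}_{p^N}$, then $\mathcal{C}$ has a finitary $d$-c.e. Scott sentence; and for any $X\subseteq\omega$ and any set $S$ that is $d$-c.e. relative to $X$, there is a uniformly $X$-computable sequence $(\mathcal{C}_n)_{n\in\omega}$ of Abelian $p$-groups of length $N$ such that $\mathcal{C}_n\cong\mathcal{C}$ iff $n\in S$.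
   Context: For an Abelian $p$-group $G$: $G_0=G$, $G_{k+1}=pG_k$; the length of a finite $G$ is the least $k$ with $G_k=G_{k+1}$. A Scott sentence for $\mathcal{C}$ (within a class $K$) is a sentence whose countable models (in $K$) are exactly the copies of $\mathcal{C}$. A finitary $d$-c.e. sentence is the conjunction of a finitary existential sentence and a finitary universal sentence. A set is $d$-c.e. relative to $X$ if it is $S_1-S_2$ with $S_1,S_2$ c.e. in $X$. A sequence of structures is uniformly $X$-computable if their atomic diagrams are uniformly computable in $X$. *)

theory Defs
  imports "HOL-Algebra.Algebra"
begin

datatype rf = RZero | RSuc | RProj nat | RComp rf "rf list" | RPrec rf rf | RMu rf | ROrc

inductive rf_eval :: "nat set \<Rightarrow> rf \<Rightarrow> nat list \<Rightarrow> nat \<Rightarrow> bool" for Xo where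
  zero: "rf_eval Xo RZero xs 0"
| suc: "rf_eval Xo RSuc (x # xs) (Suc x)"
| proj: "i < length xs \<Longrightarrow> rf_eval Xo (RProj i) xs (xs ! i)"
| comp: "list_all2 (\<lambda>g y. rf_eval Xo g xs y) gs ys \<Longrightarrow> rf_eval Xo f ys z
          \<Longrightarrow> rf_eval Xo (RComp f gs) xs z"
| prec0: "rf_eval Xo g xs y \<Longrightarrow> rf_eval Xo (RPrec g h) (0 # xs) y"
| precS: "rf_eval Xo (RPrec g h) (n # xs) y \<Longrightarrow> rf_eval Xo h (n # y # xs) z
          \<Longrightarrow> rf_eval Xo (RPrec g h) (Suc n # xs) z"
| mu: "rf_eval Xo f (n # xs) 0 \<Longrightarrow> (\<forall>m<n. \<exists>k. rf_eval Xo f (m # xs) (Suc k))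
          \<Longrightarrow> rf_eval Xo (RMu f) xs n"
| orc: "rf_eval Xo ROrc (x # xs) (if x \<in> Xo then 1 else 0)"

definition ce_in :: "nat set \<Rightarrow> nat set \<Rightarrow> bool" where
  "ce_in Xo A \<longleftrightarrow> (\<exists>f. \<forall>n. n \<in> A \<longleftrightarrow> (\<exists>y. rf_eval Xo f [n] y))"

definition pi01_in :: "nat set \<Rightarrow> nat set \<Rightarrow> bool" where
  "pi01_in Xo A \<longleftrightarrow> ce_in Xo (- A)"

definition dce_in :: "nat set \<Rightarrow> nat set \<Rightarrow> bool" where
  "dce_in Xo A \<longleftrightarrow> (\<exists>S1 S2. ce_in Xo S1 \<and> ce_in Xo S2 \<and> A = S1 - S2)"

definition L_structure :: "('a, 'b) monoid_scheme \<Rightarrow> bool" where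
  "L_structure M \<longleftrightarrow> carrier M \<noteq> {} \<and> \<one>\<^bsub>M\<^esub> \<in> carrier M \<and>
     (\<forall>x\<in>carrier M. \<forall>y\<in>carrier M. x \<otimes>\<^bsub>M\<^esub> y \<in> carrier M)"

definition struct_iso :: "('a, 'c) monoid_scheme \<Rightarrow> ('b, 'd) monoid_scheme \<Rightarrow> bool" where
  "struct_iso M N \<longleftrightarrow> (\<exists>h. bij_betw h (carrier M) (carrier N) \<and> h \<one>\<^bsub>M\<^esub> = \<one>\<^bsub>N\<^esub> \<and>
     (\<forall>x\<in>carrier M. \<forall>y\<in>carrier M. h (x \<otimes>\<^bsub>M\<^esub> y) = h x \<otimes>\<^bsub>N\<^esub> h y))"

definition unif_computable_seq :: "nat set \<Rightarrow> (nat \<Rightarrow> nat monoid) \<Rightarrow> bool" where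
  "unif_computable_seq Xo Cs \<longleftrightarrow>
     (\<exists>f. \<forall>n a. rf_eval Xo f [n, a] (if a \<in> carrier (Cs n) then 1 else 0)) \<and>
     (\<exists>f. \<forall>n a. rf_eval Xo f [n, a] (if a = \<one>\<^bsub>Cs n\<^esub> then 1 else 0)) \<and>
     (\<exists>f. \<forall>n a b c. rf_eval Xo f [n, a, b, c]
        (if a \<in> carrier (Cs n) \<and> b \<in> carrier (Cs n) \<and> c \<in> carrier (Cs n) \<and>
            a \<otimes>\<^bsub>Cs n\<^esub> b = c then 1 else 0))"

datatype tm = TVar nat | TOne | TMul tm tm
datatype fm = FEq tm tm | FNot fm | FAnd fm fm | FOr fm fm | FEx nat fm | FAll nat fm

fun tm_vars :: "tm \<Rightarrow> nat set" where
  "tm_vars (TVar x) = {x}" | "tm_vars TOne = {}" | "tm_vars (TMul s t) = tm_vars s \<union> tm_vars t"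

fun fv :: "fm \<Rightarrow> nat set" where
  "fv (FEq s t) = tm_vars s \<union> tm_vars t"
| "fv (FNot \<phi>) = fv \<phi>"
| "fv (FAnd \<phi> \<psi>) = fv \<phi> \<union> fv \<psi>"
| "fv (FOr \<phi> \<psi>) = fv \<phi> \<union> fv \<psi>"
| "fv (FEx x \<phi>) = fv \<phi> - {x}"
| "fv (FAll x \<phi>) = fv \<phi> - {x}"

fun qfree :: "fm \<Rightarrow> bool" where
  "qfree (FEq s t) = True"
| "qfree (FNot \<phi>) = qfree \<phi>"
| "qfree (FAnd \<phi> \<psi>) = (qfree \<phi> \<and> qfree \<psi>)"
| "qfree (FOr \<phi> \<psi>) = (qfree \<phi> \<and> qfree \<psi>)"
| "qfree (FEx x \<phi>) = False"
| "qfree (FAll x \<phi>) = False"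

fun existential :: "fm \<Rightarrow> bool" where
  "existential (FEx x \<phi>) = existential \<phi>"
| "existential \<phi> = qfree \<phi>"

fun universal :: "fm \<Rightarrow> bool" where
  "universal (FAll x \<phi>) = universal \<phi>"
| "universal \<phi> = qfree \<phi>"

definition sentence :: "fm \<Rightarrow> bool" where
  "sentence \<phi> \<longleftrightarrow> fv \<phi> = {}"

definition dce_sentence :: "fm \<Rightarrow> bool" where
  "dce_sentence \<phi> \<longleftrightarrow> (\<exists>\<alpha> \<beta>. sentence \<alpha> \<and> sentence \<beta> \<and> existential \<alpha> \<and> universal \<beta> \<and>
      \<phi> = FAnd \<alpha> \<beta>)"

fun tm_eval :: "('a, 'b) monoid_scheme \<Rightarrow> (nat \<Rightarrow> 'a) \<Rightarrow> tm \<Rightarrow> 'a" where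
  "tm_eval M e (TVar x) = e x"
| "tm_eval M e TOne = \<one>\<^bsub>M\<^esub>"
| "tm_eval M e (TMul s t) = tm_eval M e s \<otimes>\<^bsub>M\<^esub> tm_eval M e t"

fun sat :: "('a, 'b) monoid_scheme \<Rightarrow> (nat \<Rightarrow> 'a) \<Rightarrow> fm \<Rightarrow> bool" where
  "sat M e (FEq s t) = (tm_eval M e s = tm_eval M e t)"
| "sat M e (FNot \<phi>) = (\<not> sat M e \<phi>)"
| "sat M e (FAnd \<phi> \<psi>) = (sat M e \<phi> \<and> sat M e \<psi>)"
| "sat M e (FOr \<phi> \<psi>) = (sat M e \<phi> \<or> sat M e \<psi>)"
| "sat M e (FEx x \<phi>) = (\<exists>a\<in>carrier M. sat M (e(x := a)) \<phi>)"
| "sat M e (FAll x \<phi>) = (\<forall>a\<in>carrier M. sat M (e(x := a)) \<phi>)"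

definition models :: "('a, 'b) monoid_scheme \<Rightarrow> fm \<Rightarrow> bool" where
  "models M \<phi> \<longleftrightarrow> sat M (\<lambda>_. \<one>\<^bsub>M\<^esub>) \<phi>"

text \<open>Scott sentence for C within class K: its countable models in K (every countable
  structure is isomorphic to one with domain contained in nat) are exactly the copies of C.\<close>
definition scott_sentence_within ::
    "(nat monoid \<Rightarrow> bool) \<Rightarrow> ('a, 'b) monoid_scheme \<Rightarrow> fm \<Rightarrow> bool" where
  "scott_sentence_within K C \<phi> \<longleftrightarrow> sentence \<phi> \<and>
     (\<forall>M :: nat monoid. L_structure M \<and> K M \<longrightarrow> (models M \<phi> \<longleftrightarrow> struct_iso M C))"

definition p_layer :: "nat \<Rightarrow> ('a, 'b) monoid_scheme \<Rightarrow> nat \<Rightarrow> 'a set" where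
  "p_layer p G k = (\<lambda>x. x [^]\<^bsub>G\<^esub> (p ^ k)) ` carrier G"

definition abelian_p_group :: "nat \<Rightarrow> ('a, 'b) monoid_scheme \<Rightarrow> bool" where
  "abelian_p_group p G \<longleftrightarrow> comm_group G \<and>
     (\<forall>x\<in>carrier G. \<exists>n. x [^]\<^bsub>G\<^esub> (p ^ n) = \<one>\<^bsub>G\<^esub>)"

definition has_length :: "nat \<Rightarrow> ('a, 'b) monoid_scheme \<Rightarrow> nat \<Rightarrow> bool" where
  "has_length p G N \<longleftrightarrow> p_layer p G N = p_layer p G (Suc N) \<and>
     (\<forall>k<N. p_layer p G k \<noteq> p_layer p G (Suc k))"

end

theory Submission
  imports Defs
begin

text \<open>
  Among Abelian \<open>p\<close>-groups of length \<open>N\<close>, the cyclic group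
  \<open>\<int>/p\<^sup>N\<close> is the only one with at most \<open>p\<^sup>N\<close> elements (it contains an element of order
  \<open>p\<^sup>N\<close>), which is a universal statement. Any finite structure is pinned down by the
  existential sentence "there are distinct elements with this multiplication table" together
  with the universal sentence "there are at most \<open>|C|\<close> elements".

  For the sequences work inside \<open>M = C \<times> C\<close>. Let \<open>g\<close> have order \<open>p\<^sup>N\<close>, let \<open>A\<close> be the
  cyclic subgroup generated by \<open>(g, 1)\<close> and \<open>K = C \<times> 1\<close>. The groups \<open>A \<le> K \<le> M\<close> all
  have length \<open>N\<close>; \<open>K \<cong> C\<close>, while \<open>M\<close> is too large to be isomorphic to \<open>C\<close> and \<open>A\<close> is
  isomorphic to \<open>C\<close> only if \<open>C\<close> is cyclic. For \<open>S = S\<^sub>1 - S\<^sub>2\<close> the \<open>n\<close>-th group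
  starts as \<open>A\<close>, grows to \<open>K\<close> when \<open>n\<close> is enumerated into \<open>S\<^sub>1\<close> and to \<open>M\<close> when
  \<open>n\<close> is enumerated into \<open>S\<^sub>2\<close> (for a \<open>\<Pi>\<^sup>0\<^sub>1\<close> set take \<open>A = K\<close>). Its carrier is decidable because an element added at
  stage \<open>s\<close> is coded by a number that records \<open>s\<close>.
\<close>

section \<open>Closure properties of relatively computable functions\<close>

text \<open>Only the values of \<open>F\<close> on argument lists of length \<open>k\<close> matter.\<close>
definition rf_computes :: "nat set \<Rightarrow> nat \<Rightarrow> rf \<Rightarrow> (nat list \<Rightarrow> nat) \<Rightarrow> bool" where
  "rf_computes Xo k T F \<longleftrightarrow> (\<forall>xs. length xs = k \<longrightarrow> rf_eval Xo T xs (F xs))"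

definition computable :: "nat set \<Rightarrow> nat \<Rightarrow> (nat list \<Rightarrow> nat) \<Rightarrow> bool" where
  "computable Xo k F \<longleftrightarrow> (\<exists>T. rf_computes Xo k T F)"

lemma computable_cong: "computable Xo k F \<Longrightarrow> (\<And>xs. length xs = k \<Longrightarrow> F xs = G xs) \<Longrightarrow> computable Xo k G"
  unfolding computable_def rf_computes_def by metis

lemma computable_zero: "computable Xo k (\<lambda>_. 0)"
  unfolding computable_def rf_computes_def by (auto intro: rf_eval.zero)

lemma computable_proj: "i < k \<Longrightarrow> computable Xo k (\<lambda>xs. xs ! i)"
  unfolding computable_def rf_computes_def by (auto intro: rf_eval.proj)

lemma rf_computes_comp:
  assumes "rf_computes Xo (length Gs) T F" "list_all2 (\<lambda>G H. rf_computes Xo k G H) Gs Hs"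
  shows "rf_computes Xo k (RComp T Gs) (\<lambda>xs. F (map (\<lambda>H. H xs) Hs))"
  unfolding rf_computes_def
proof (intro allI impI)
  fix xs :: "nat list" assume l: "length xs = k"
  have la: "length Gs = length Hs" using assms(2) list_all2_lengthD by blast
  have "list_all2 (\<lambda>g y. rf_eval Xo g xs y) Gs (map (\<lambda>H. H xs) Hs)"
    using assms(2) l unfolding list_all2_conv_all_nth rf_computes_def by auto
  moreover have "rf_eval Xo T (map (\<lambda>H. H xs) Hs) (F (map (\<lambda>H. H xs) Hs))"
    using assms(1) la unfolding rf_computes_def by auto
  ultimately show "rf_eval Xo (RComp T Gs) xs (F (map (\<lambda>H. H xs) Hs))"
    by (rule rf_eval.comp)
qed

lemma computable_comp:
  assumes "computable Xo (length Hs) F" "\<forall>H\<in>set Hs. computable Xo k H"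
  shows "computable Xo k (\<lambda>xs. F (map (\<lambda>H. H xs) Hs))"
proof -
  obtain T where T: "rf_computes Xo (length Hs) T F" using assms(1) unfolding computable_def by auto
  have "\<forall>H\<in>set Hs. \<exists>G. rf_computes Xo k G H" using assms(2) unfolding computable_def by auto
  then obtain g where g: "\<forall>H\<in>set Hs. rf_computes Xo k (g H) H" by metis
  have "list_all2 (\<lambda>G H. rf_computes Xo k G H) (map g Hs) Hs"
    using g by (auto simp: list_all2_conv_all_nth)
  then show ?thesis using rf_computes_comp[of Xo "map g Hs" T F k Hs] T unfolding computable_def by auto
qed

lemma computable_comp1:
  assumes "computable Xo 1 F" "computable Xo k H1"
  shows "computable Xo k (\<lambda>xs. F [H1 xs])"
  using computable_comp[of Xo "[H1]" F k] assms by simp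

lemma computable_comp2:
  assumes "computable Xo 2 F" "computable Xo k H1" "computable Xo k H2"
  shows "computable Xo k (\<lambda>xs. F [H1 xs, H2 xs])"
  using computable_comp[of Xo "[H1,H2]" F k] assms by (simp add: numeral_2_eq_2)

lemma computable_Suc_base: "computable Xo 1 (\<lambda>xs. Suc (xs ! 0))"
  unfolding computable_def rf_computes_def
proof (intro exI allI impI)
  fix xs :: "nat list" assume "length xs = 1"
  then obtain x where "xs = [x]" by (cases xs) auto
  then show "rf_eval Xo RSuc xs (Suc (xs ! 0))" by (auto intro: rf_eval.suc)
qed

lemma computable_oracle_base: "computable Xo 1 (\<lambda>xs. if xs ! 0 \<in> Xo then 1 else 0)"
  unfolding computable_def rf_computes_def
proof (intro exI allI impI)
  fix xs :: "nat list" assume "length xs = 1"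
  then obtain x where "xs = [x]" by (cases xs) auto
  then show "rf_eval Xo ROrc xs (if xs ! 0 \<in> Xo then 1 else 0)" using rf_eval.orc[of Xo x "[]"] by simp
qed

lemma computable_Suc: "computable Xo k F \<Longrightarrow> computable Xo k (\<lambda>xs. Suc (F xs))"
  using computable_comp1[OF computable_Suc_base] by simp

lemma computable_oracle: "computable Xo k F \<Longrightarrow> computable Xo k (\<lambda>xs. if F xs \<in> Xo then 1 else 0)"
  using computable_comp1[OF computable_oracle_base] by simp

lemma computable_const: "computable Xo k (\<lambda>_. c)"
  by (induction c) (auto intro: computable_zero computable_Suc[where F="\<lambda>_. _", simplified])

lemma computable_rec_nat:
  assumes "computable Xo k Fg" "computable Xo (Suc (Suc k)) Fh"
  shows "computable Xo (Suc k) (\<lambda>xs. rec_nat (Fg (tl xs)) (\<lambda>n r. Fh (n # r # tl xs)) (hd xs))"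
proof -
  obtain G H where G: "rf_computes Xo k G Fg" and H: "rf_computes Xo (Suc (Suc k)) H Fh"
    using assms unfolding computable_def by auto
  have P: "rf_eval Xo (RPrec G H) (n # ys) (rec_nat (Fg ys) (\<lambda>n r. Fh (n # r # ys)) n)"
    if "length ys = k" for n ys
  proof (induction n)
    case 0 then show ?case using G that unfolding rf_computes_def by (auto intro: rf_eval.prec0)
  next
    case (Suc n) then show ?case using H that unfolding rf_computes_def by (auto intro: rf_eval.precS)
  qed
  then have "rf_computes Xo (Suc k) (RPrec G H) (\<lambda>xs. rec_nat (Fg (tl xs)) (\<lambda>n r. Fh (n # r # tl xs)) (hd xs))"
    unfolding rf_computes_def
  proof (intro allI impI)
    fix xs :: "nat list" assume "length xs = Suc k"
    then obtain n ys where "xs = n # ys" "length ys = k" by (cases xs) auto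
    then show "rf_eval Xo (RPrec G H) xs (rec_nat (Fg (tl xs)) (\<lambda>n r. Fh (n # r # tl xs)) (hd xs))"
      using P by simp
  qed
  then show ?thesis unfolding computable_def by auto
qed

lemma computable_rec_nat1:
  assumes "computable Xo 0 Fg" "computable Xo 2 Fh"
  shows "computable Xo 1 (\<lambda>xs. rec_nat (Fg []) (\<lambda>n r. Fh [n, r]) (xs!0))"
proof -
  have "computable Xo (Suc 0) (\<lambda>xs. rec_nat (Fg (tl xs)) (\<lambda>n r. Fh (n # r # tl xs)) (hd xs))"
    using computable_rec_nat[of Xo 0 Fg Fh] assms by (simp add: numeral_2_eq_2)
  then show ?thesis unfolding One_nat_def
    by (rule computable_cong) (auto simp: length_Suc_conv)
qed

lemma computable_rec_nat2:
  assumes "computable Xo 1 Fg" "computable Xo 3 Fh"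
  shows "computable Xo 2 (\<lambda>xs. rec_nat (Fg [xs!1]) (\<lambda>n r. Fh [n, r, xs!1]) (xs!0))"
proof -
  have "computable Xo (Suc 1) (\<lambda>xs. rec_nat (Fg (tl xs)) (\<lambda>n r. Fh (n # r # tl xs)) (hd xs))"
    using computable_rec_nat[of Xo 1 Fg Fh] assms by (simp add: numeral_3_eq_3)
  then show ?thesis unfolding numeral_2_eq_2 One_nat_def
    by (rule computable_cong) (auto simp: length_Suc_conv)
qed

lemma rec_nat_add: "rec_nat b (\<lambda>n r. Suc r) a = a + (b::nat)"
  by (induction a) auto
lemma rec_nat_mult: "rec_nat 0 (\<lambda>n r. r + b) a = a * (b::nat)"
  by (induction a) auto
lemma rec_nat_pred: "rec_nat 0 (\<lambda>n r. n) a = a - (1::nat)"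
  by (induction a) auto
lemma rec_nat_diff: "rec_nat b (\<lambda>n r. r - Suc 0) a = b - (a::nat)"
  by (induction a) auto
lemma rec_nat_sgn: "rec_nat 0 (\<lambda>n r. Suc 0) a = (if a = 0 then 0 else Suc 0)"
  by (induction a) auto

lemma computable_add_base: "computable Xo 2 (\<lambda>l. l!0 + l!1)"
proof -
  have "computable Xo 2 (\<lambda>xs. rec_nat ([xs!1] ! 0) (\<lambda>n r. Suc ([n, r, xs!1] ! 1)) (xs!0))"
    by (rule computable_rec_nat2[OF computable_proj computable_Suc[OF computable_proj]]) auto
  then show ?thesis by (rule computable_cong) (simp add: rec_nat_add)
qed

lemma computable_add: "computable Xo k F \<Longrightarrow> computable Xo k G \<Longrightarrow> computable Xo k (\<lambda>xs. F xs + G xs)"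
  using computable_comp2[OF computable_add_base] by simp

lemma computable_mult_base: "computable Xo 2 (\<lambda>l. l!0 * l!1)"
proof -
  have "computable Xo 2 (\<lambda>xs. rec_nat ((\<lambda>_. 0) [xs!1]) (\<lambda>n r. [n, r, xs!1] ! 1 + [n, r, xs!1] ! 2) (xs!0))"
    by (rule computable_rec_nat2[OF computable_zero computable_add[OF computable_proj computable_proj]]) auto
  then show ?thesis by (rule computable_cong) (simp add: rec_nat_mult)
qed

lemma computable_mult: "computable Xo k F \<Longrightarrow> computable Xo k G \<Longrightarrow> computable Xo k (\<lambda>xs. F xs * G xs)"
  using computable_comp2[OF computable_mult_base] by simp

lemma computable_pred_base: "computable Xo 1 (\<lambda>l. l!0 - 1)"
proof -
  have "computable Xo 1 (\<lambda>xs. rec_nat ((\<lambda>_. 0) []) (\<lambda>n r. [n, r] ! 0) (xs!0))"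
    by (rule computable_rec_nat1[OF computable_zero computable_proj]) auto
  then show ?thesis by (rule computable_cong) (simp add: rec_nat_pred)
qed

lemma computable_pred: "computable Xo k F \<Longrightarrow> computable Xo k (\<lambda>xs. F xs - 1)"
  using computable_comp1[OF computable_pred_base] by simp

lemma computable_diff_base: "computable Xo 2 (\<lambda>l. l!1 - l!0)"
proof -
  have "computable Xo 2 (\<lambda>xs. rec_nat ([xs!1] ! 0) (\<lambda>n r. [n, r, xs!1] ! 1 - 1) (xs!0))"
    by (rule computable_rec_nat2[OF computable_proj computable_pred[OF computable_proj]]) auto
  then show ?thesis by (rule computable_cong) (simp add: rec_nat_diff)
qed

lemma computable_diff: "computable Xo k F \<Longrightarrow> computable Xo k G \<Longrightarrow> computable Xo k (\<lambda>xs. F xs - G xs)"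
  using computable_comp2[OF computable_diff_base, where k=k and ?H1.0=G and ?H2.0=F] by simp

lemma computable_sgn_base: "computable Xo 1 (\<lambda>l. if l!0 = 0 then 0 else 1)"
proof -
  have "computable Xo 1 (\<lambda>xs. rec_nat ((\<lambda>_. 0) []) (\<lambda>n r. (\<lambda>_. 1) [n, r]) (xs!0))"
    by (rule computable_rec_nat1[OF computable_zero computable_const])
  then show ?thesis by (rule computable_cong) (simp add: rec_nat_sgn)
qed

definition decidable :: "nat set \<Rightarrow> nat \<Rightarrow> (nat list \<Rightarrow> bool) \<Rightarrow> bool" where
  "decidable Xo k P \<longleftrightarrow> computable Xo k (\<lambda>xs. if P xs then 1 else 0)"

lemma decidable_nonzero: "computable Xo k F \<Longrightarrow> decidable Xo k (\<lambda>xs. F xs \<noteq> 0)"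
proof -
  assume "computable Xo k F"
  then have "computable Xo k (\<lambda>xs. if F xs = 0 then 0 else 1)" using computable_comp1[OF computable_sgn_base, where k=k and ?H1.0=F] by simp
  then show ?thesis unfolding decidable_def by (rule computable_cong) auto
qed

lemma decidable_not: "decidable Xo k P \<Longrightarrow> decidable Xo k (\<lambda>xs. \<not> P xs)"
  unfolding decidable_def by (rule computable_cong[OF computable_diff[OF computable_const]]) auto

lemma decidable_conj: "decidable Xo k P \<Longrightarrow> decidable Xo k Q \<Longrightarrow> decidable Xo k (\<lambda>xs. P xs \<and> Q xs)"
proof -
  assume "decidable Xo k P" "decidable Xo k Q"
  then have "computable Xo k (\<lambda>xs. (if P xs then 1 else 0) * (if Q xs then 1 else 0))"
    unfolding decidable_def by (rule computable_mult)
  then show ?thesis unfolding decidable_def by (rule computable_cong) auto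
qed

lemma decidable_disj: "decidable Xo k P \<Longrightarrow> decidable Xo k Q \<Longrightarrow> decidable Xo k (\<lambda>xs. P xs \<or> Q xs)"
proof -
  assume "decidable Xo k P" "decidable Xo k Q"
  then have "decidable Xo k (\<lambda>xs. \<not> (\<not> P xs \<and> \<not> Q xs))" by (intro decidable_not decidable_conj)
  then show ?thesis by simp
qed

lemma decidable_eq: "computable Xo k F \<Longrightarrow> computable Xo k G \<Longrightarrow> decidable Xo k (\<lambda>xs. F xs = G xs)"
proof -
  assume "computable Xo k F" "computable Xo k G"
  then have "decidable Xo k (\<lambda>xs. \<not> ((F xs - G xs) + (G xs - F xs) \<noteq> 0))"
    by (intro decidable_not decidable_nonzero computable_add computable_diff)
  then show ?thesis unfolding decidable_def by (rule computable_cong) auto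
qed

lemma decidable_const: "decidable Xo k (\<lambda>_. b)"
  unfolding decidable_def by (rule computable_const)

lemma computable_If: "decidable Xo k P \<Longrightarrow> computable Xo k F \<Longrightarrow> computable Xo k G \<Longrightarrow> computable Xo k (\<lambda>xs. if P xs then F xs else G xs)"
proof -
  assume a: "decidable Xo k P" "computable Xo k F" "computable Xo k G"
  have "computable Xo k (\<lambda>xs. (if P xs then 1 else 0) * F xs + (1 - (if P xs then 1 else 0)) * G xs)"
    using a unfolding decidable_def by (intro computable_add computable_mult computable_diff computable_const)
  then show ?thesis by (rule computable_cong) auto
qed

lemma decidable_ball: "(\<And>x. x \<in> set xs \<Longrightarrow> decidable Xo k (P x)) \<Longrightarrow> decidable Xo k (\<lambda>l. \<forall>x\<in>set xs. P x l)"
  by (induction xs) (auto intro: decidable_const decidable_conj)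

lemma decidable_cong: "decidable Xo k P \<Longrightarrow> (\<And>xs. length xs = k \<Longrightarrow> P xs = Q xs) \<Longrightarrow> decidable Xo k Q"
  unfolding decidable_def by (erule computable_cong) auto

lemma computable_sum: "finite I \<Longrightarrow> (\<forall>i\<in>I. computable Xo k (F i)) \<Longrightarrow> computable Xo k (\<lambda>l. \<Sum>i\<in>I. F i l)"
proof (induction I rule: finite_induct)
  case empty then show ?case by (simp add: computable_const)
next
  case (insert x I)
  then have "computable Xo k (\<lambda>l. F x l + (\<Sum>i\<in>I. F i l))" by (intro computable_add) auto
  then show ?case using insert by simp
qed

lemma decidable_mem_finite: "finite S \<Longrightarrow> computable Xo k F \<Longrightarrow> decidable Xo k (\<lambda>l. F l \<in> S)"
proof (induction S rule: finite_induct)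
  case empty then show ?case using decidable_const[of Xo k False] by simp
next
  case (insert x S)
  then have "decidable Xo k (\<lambda>l. F l = x \<or> F l \<in> S)" by (intro decidable_disj decidable_eq computable_const) auto
  then show ?case by simp
qed

lemma computable_table:
  assumes "computable Xo k F1" "computable Xo k F2"
  shows "computable Xo k (\<lambda>l. if F1 l < m \<and> F2 l < m then T (F1 l) (F2 l) else 0)"
proof -
  have "computable Xo k (\<lambda>l. \<Sum>i\<in>{..<m}. \<Sum>j\<in>{..<m}. (if F1 l = i \<and> F2 l = j then T i j else 0))"
    using assms by (intro computable_sum ballI computable_If decidable_conj decidable_eq computable_const) auto
  then show ?thesis
  proof (rule computable_cong)
    fix l :: "nat list"
    show "(\<Sum>i\<in>{..<m}. \<Sum>j\<in>{..<m}. (if F1 l = i \<and> F2 l = j then T i j else 0))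
      = (if F1 l < m \<and> F2 l < m then T (F1 l) (F2 l) else 0)"
    proof (cases "F1 l < m \<and> F2 l < m")
      case True
      have "(\<Sum>i\<in>{..<m}. \<Sum>j\<in>{..<m}. (if F1 l = i \<and> F2 l = j then T i j else 0))
          = (\<Sum>i\<in>{..<m}. if F1 l = i then T i (F2 l) else 0)"
        using True by (intro sum.cong refl) (auto simp: sum.delta' if_distrib cong: if_cong)
      also have "\<dots> = T (F1 l) (F2 l)" using True by (simp add: sum.delta')
      finally show ?thesis using True by simp
    next
      case False
      then show ?thesis by (auto intro!: sum.neutral)
    qed
  qed
qed

lemma rec_nat_mod: "0 < m \<Longrightarrow> rec_nat 0 (\<lambda>n r. if Suc r = m then 0 else Suc r) a = a mod (m::nat)"
  by (induction a) (auto simp: mod_Suc)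

lemma computable_mod: "0 < m \<Longrightarrow> computable Xo k F \<Longrightarrow> computable Xo k (\<lambda>l. F l mod m)"
proof -
  assume m: "0 < m" and F: "computable Xo k F"
  have "computable Xo 1 (\<lambda>xs. rec_nat ((\<lambda>_. 0) []) (\<lambda>n r. (\<lambda>L. if Suc (L!Suc 0) = m then 0 else Suc (L!Suc 0)) [n, r]) (xs!0))"
    by (rule computable_rec_nat1[OF computable_zero]) (intro computable_If decidable_eq computable_Suc computable_proj computable_const; simp)
  then have "computable Xo 1 (\<lambda>xs. xs!0 mod m)" by (rule computable_cong) (simp add: rec_nat_mod[OF m, symmetric] One_nat_def cong: if_cong)
  from computable_comp1[OF this F] show ?thesis by simp
qed

lemma rec_nat_div: "0 < m \<Longrightarrow> rec_nat 0 (\<lambda>n r. if Suc (n mod m) = m then Suc r else r) a = a div (m::nat)"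
  by (induction a) (auto simp: div_Suc mod_Suc)

lemma computable_div: "0 < m \<Longrightarrow> computable Xo k F \<Longrightarrow> computable Xo k (\<lambda>l. F l div m)"
proof -
  assume m: "0 < m" and F: "computable Xo k F"
  have "computable Xo 1 (\<lambda>xs. rec_nat ((\<lambda>_. 0) []) (\<lambda>n r. (\<lambda>L. if Suc (L!0 mod m) = m then Suc (L!Suc 0) else L!Suc 0) [n, r]) (xs!0))"
    by (rule computable_rec_nat1[OF computable_zero]) (intro computable_If decidable_eq computable_Suc computable_proj computable_const computable_mod m; simp)
  then have "computable Xo 1 (\<lambda>xs. xs!0 div m)" by (rule computable_cong) (simp add: rec_nat_div[OF m, symmetric] One_nat_def cong: if_cong)
  from computable_comp1[OF this F] show ?thesis by simp
qed

lemma decidable2_rf_eval: "decidable Xo 2 P \<Longrightarrow> \<exists>f. \<forall>n a. rf_eval Xo f [n, a] (if P [n, a] then 1 else 0)"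
proof -
  assume "decidable Xo 2 P"
  then obtain f where "\<forall>xs. length xs = 2 \<longrightarrow> rf_eval Xo f xs (if P xs then 1 else 0)"
    unfolding decidable_def computable_def rf_computes_def by blast
  then show ?thesis by (intro exI[of _ f] allI) simp
qed

lemma decidable4_rf_eval: "decidable Xo 4 P \<Longrightarrow> \<exists>f. \<forall>n a b c. rf_eval Xo f [n, a, b, c] (if P [n, a, b, c] then 1 else 0)"
proof -
  assume "decidable Xo 4 P"
  then obtain f where "\<forall>xs. length xs = 4 \<longrightarrow> rf_eval Xo f xs (if P xs then 1 else 0)"
    unfolding decidable_def computable_def rf_computes_def by blast
  then show ?thesis by (intro exI[of _ f] allI) simp
qed

section \<open>Evaluation with bounded search\<close>

text \<open>\<open>mu_search F i\<close> scans \<open>F 0, \<dots>, F (i - 1)\<close>: it is \<open>0\<close> while all values seen are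
  positive, \<open>1\<close> once an undefined value is met, and \<open>j + 2\<close> if \<open>j\<close> is the first zero.\<close>
fun mu_search :: "(nat \<Rightarrow> nat option) \<Rightarrow> nat \<Rightarrow> nat" where
  "mu_search F 0 = 0"
| "mu_search F (Suc i) = (if mu_search F i \<noteq> 0 then mu_search F i else
     (case F i of None \<Rightarrow> 1 | Some 0 \<Rightarrow> i + 2 | Some (Suc _) \<Rightarrow> 0))"

text \<open>Every unbounded search is cut off after \<open>s + 1\<close> candidates; \<open>None\<close> means that no value
  was found within that bound.\<close>
primrec eval_steps :: "nat set \<Rightarrow> rf \<Rightarrow> nat \<Rightarrow> nat list \<Rightarrow> nat option" where
  "eval_steps Xo RZero = (\<lambda>s xs. Some 0)"
| "eval_steps Xo RSuc = (\<lambda>s xs. case xs of [] \<Rightarrow> None | x # _ \<Rightarrow> Some (Suc x))"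
| "eval_steps Xo (RProj i) = (\<lambda>s xs. if i < length xs then Some (xs ! i) else None)"
| "eval_steps Xo (RComp f gs) = (\<lambda>s xs. let rs = map (\<lambda>e. e s xs) (map (eval_steps Xo) gs) in
      if None \<in> set rs then None else eval_steps Xo f s (map the rs))"
| "eval_steps Xo (RPrec g h) = (\<lambda>s xs. case xs of [] \<Rightarrow> None | n # ys \<Rightarrow>
      rec_nat (eval_steps Xo g s ys) (\<lambda>i acc. case acc of None \<Rightarrow> None | Some v \<Rightarrow> eval_steps Xo h s (i # v # ys)) n)"
| "eval_steps Xo (RMu f) = (\<lambda>s xs. let st = mu_search (\<lambda>m. eval_steps Xo f s (m # xs)) (Suc s) in
      if 2 \<le> st then Some (st - 2) else None)"
| "eval_steps Xo ROrc = (\<lambda>s xs. case xs of [] \<Rightarrow> None | x # _ \<Rightarrow> Some (if x \<in> Xo then 1 else 0))"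

lemma eval_steps_RComp: "eval_steps Xo (RComp f gs) s xs = (let rs = map (\<lambda>g. eval_steps Xo g s xs) gs in
      if None \<in> set rs then None else eval_steps Xo f s (map the rs))"
  by (simp add: map_map o_def)

declare eval_steps.simps(4)[simp del]

lemma mu_search_zeroD: "mu_search F i = 0 \<Longrightarrow> m < i \<Longrightarrow> \<exists>k. F m = Some (Suc k)"
proof (induction i)
  case 0 then show ?case by simp
next
  case (Suc i)
  show ?case
  proof (cases "mu_search F i = 0")
    case True
    then show ?thesis using Suc by (cases "F i") (auto split: nat.splits if_splits simp: less_Suc_eq)
  next
    case False then show ?thesis using Suc by simp
  qed
qed

lemma mu_search_zeroI: "(\<forall>m<i. \<exists>k. F m = Some (Suc k)) \<Longrightarrow> mu_search F i = 0"
  by (induction i) auto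

lemma mu_search_foundD: "mu_search F i = j + 2 \<Longrightarrow> j < i \<and> F j = Some 0 \<and> (\<forall>m<j. \<exists>k. F m = Some (Suc k))"
proof (induction i)
  case 0 then show ?case by simp
next
  case (Suc i)
  show ?case
  proof (cases "mu_search F i = 0")
    case True
    then have "(case F i of None \<Rightarrow> 1 | Some 0 \<Rightarrow> i + 2 | Some (Suc _) \<Rightarrow> 0) = j + 2" using Suc.prems by simp
    then have "F i = Some 0 \<and> j = i" by (auto split: option.splits nat.splits)
    then show ?thesis using mu_search_zeroD[OF True] by auto
  next
    case False then show ?thesis using Suc by simp
  qed
qed

lemma mu_search_foundI: "j < i \<Longrightarrow> F j = Some 0 \<Longrightarrow> (\<forall>m<j. \<exists>k. F m = Some (Suc k)) \<Longrightarrow> mu_search F i = j + 2"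
proof (induction i)
  case 0 then show ?case by simp
next
  case (Suc i)
  show ?case
  proof (cases "j < i")
    case True then show ?thesis using Suc by simp
  next
    case False
    then have "j = i" using Suc by simp
    then show ?thesis using mu_search_zeroI[of j F] Suc by simp
  qed
qed

lemma eval_steps_sound: "eval_steps Xo f s xs = Some y \<Longrightarrow> rf_eval Xo f xs y"
proof (induction f arbitrary: xs y)
  case RZero then show ?case by (auto intro: rf_eval.zero)
next
  case RSuc then show ?case by (auto split: list.splits intro: rf_eval.suc)
next
  case (RProj i) then show ?case by (auto split: if_splits intro: rf_eval.proj)
next
  case (RComp f gs)
  let ?rs = "map (\<lambda>g. eval_steps Xo g s xs) gs"
  have nn: "None \<notin> set ?rs" and fe: "eval_steps Xo f s (map the ?rs) = Some y"
    using RComp.prems by (auto simp: Let_def eval_steps_RComp split: if_splits)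
  have "list_all2 (\<lambda>g y. rf_eval Xo g xs y) gs (map the ?rs)"
    unfolding list_all2_conv_all_nth
  proof (intro conjI allI impI)
    fix i assume i: "i < length gs"
    then have "eval_steps Xo (gs ! i) s xs \<noteq> None" using nn by (metis length_map nth_map nth_mem)
    then have "eval_steps Xo (gs ! i) s xs = Some (map the ?rs ! i)" using i by auto
    then show "rf_eval Xo (gs ! i) xs (map the ?rs ! i)" using RComp.IH(2) i by auto
  qed simp
  then show ?case using RComp.IH(1)[OF fe] by (rule rf_eval.comp)
next
  case (RPrec g h)
  then obtain n ys where xs: "xs = n # ys" by (cases xs) auto
  have "rec_nat (eval_steps Xo g s ys) (\<lambda>i acc. case acc of None \<Rightarrow> None | Some v \<Rightarrow> eval_steps Xo h s (i # v # ys)) n = Some y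
    \<Longrightarrow> rf_eval Xo (RPrec g h) (n # ys) y" for y
  proof (induction n arbitrary: y)
    case 0 then show ?case using RPrec.IH(1) by (auto intro: rf_eval.prec0)
  next
    case (Suc n)
    then obtain v where v: "rec_nat (eval_steps Xo g s ys) (\<lambda>i acc. case acc of None \<Rightarrow> None | Some v \<Rightarrow> eval_steps Xo h s (i # v # ys)) n = Some v"
      and hv: "eval_steps Xo h s (n # v # ys) = Some y" by (auto split: option.splits)
    show ?case using Suc.IH[OF v] RPrec.IH(2)[OF hv] by (rule rf_eval.precS)
  qed
  then show ?case using RPrec.prems xs by simp
next
  case (RMu f)
  let ?F = "\<lambda>m. eval_steps Xo f s (m # xs)"
  have "mu_search ?F (Suc s) = y + 2" using RMu.prems by (auto simp: Let_def split: if_splits)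
  from mu_search_foundD[OF this] have "?F y = Some 0" "\<forall>m<y. \<exists>k. ?F m = Some (Suc k)" by auto
  then show ?case using RMu.IH by (blast intro: rf_eval.mu)
next
  case ROrc then show ?case by (auto split: list.splits intro: rf_eval.orc)
qed

lemma eval_steps_mono: "eval_steps Xo f s xs = Some y \<Longrightarrow> s \<le> s' \<Longrightarrow> eval_steps Xo f s' xs = Some y"
proof (induction f arbitrary: xs y)
  case (RComp f gs)
  let ?rs = "map (\<lambda>g. eval_steps Xo g s xs) gs"
  let ?rs' = "map (\<lambda>g. eval_steps Xo g s' xs) gs"
  have nn: "None \<notin> set ?rs" and fe: "eval_steps Xo f s (map the ?rs) = Some y"
    using RComp.prems by (auto simp: Let_def eval_steps_RComp split: if_splits)
  have eq: "?rs' = ?rs"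
  proof (rule nth_equalityI)
    fix i assume "i < length ?rs'"
    then have i: "i < length gs" by simp
    then have "eval_steps Xo (gs ! i) s xs \<noteq> None" using nn by (metis length_map nth_map nth_mem)
    then obtain v where "eval_steps Xo (gs ! i) s xs = Some v" by auto
    then show "?rs' ! i = ?rs ! i" using RComp.IH(2) i RComp.prems(2) by auto
  qed simp
  show ?case using RComp.IH(1)[OF fe RComp.prems(2)] nn eq unfolding eval_steps_RComp Let_def by (simp only: eq) simp
next
  case (RPrec g h)
  then obtain n ys where xs: "xs = n # ys" by (cases xs) auto
  have "rec_nat (eval_steps Xo g s ys) (\<lambda>i acc. case acc of None \<Rightarrow> None | Some v \<Rightarrow> eval_steps Xo h s (i # v # ys)) n = Some y
    \<Longrightarrow> rec_nat (eval_steps Xo g s' ys) (\<lambda>i acc. case acc of None \<Rightarrow> None | Some v \<Rightarrow> eval_steps Xo h s' (i # v # ys)) n = Some y" for y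
  proof (induction n arbitrary: y)
    case 0 then show ?case using RPrec.IH(1) RPrec.prems(2) by auto
  next
    case (Suc n)
    then obtain v where v: "rec_nat (eval_steps Xo g s ys) (\<lambda>i acc. case acc of None \<Rightarrow> None | Some v \<Rightarrow> eval_steps Xo h s (i # v # ys)) n = Some v"
      and hv: "eval_steps Xo h s (n # v # ys) = Some y" by (auto split: option.splits)
    show ?case using Suc.IH[OF v] RPrec.IH(2)[OF hv RPrec.prems(2)] by simp
  qed
  then show ?case using RPrec.prems xs by simp
next
  case (RMu f)
  let ?F = "\<lambda>m. eval_steps Xo f s (m # xs)"
  let ?F' = "\<lambda>m. eval_steps Xo f s' (m # xs)"
  have "mu_search ?F (Suc s) = y + 2" using RMu.prems by (auto simp: Let_def split: if_splits)
  from mu_search_foundD[OF this] have a: "y < Suc s" "?F y = Some 0" "\<forall>m<y. \<exists>k. ?F m = Some (Suc k)" by auto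
  have "mu_search ?F' (Suc s') = y + 2"
  proof (rule mu_search_foundI)
    show "y < Suc s'" using a(1) RMu.prems(2) by simp
    show "?F' y = Some 0" using a(2) RMu.IH RMu.prems(2) by blast
    show "\<forall>m<y. \<exists>k. ?F' m = Some (Suc k)" using a(3) RMu.IH RMu.prems(2) by blast
  qed
  then show ?case by (simp add: Let_def)
qed auto

lemma eval_steps_list_eventually:
  assumes "list_all2 (\<lambda>g y. \<exists>s. eval_steps Xo g s xs = Some y) gs ys"
  shows "\<exists>S. \<forall>s\<ge>S. map (\<lambda>g. eval_steps Xo g s xs) gs = map Some ys"
  using assms
proof (induction rule: list_all2_induct)
  case Nil then show ?case by simp
next
  case (Cons g gs y ys)
  then obtain s0 S where "eval_steps Xo g s0 xs = Some y" "\<forall>s\<ge>S. map (\<lambda>g. eval_steps Xo g s xs) gs = map Some ys" by auto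
  then have "\<forall>s\<ge>max s0 S. map (\<lambda>g. eval_steps Xo g s xs) (g # gs) = map Some (y # ys)"
    using eval_steps_mono[of Xo g s0 xs y] by simp
  then show ?case by blast
qed

lemma eval_steps_positive_eventually:
  assumes "\<forall>m<n. \<exists>k s. eval_steps Xo f s (m # xs) = Some (Suc k)"
  shows "\<exists>S. \<forall>s\<ge>S. \<forall>m<n. \<exists>k. eval_steps Xo f s (m # xs) = Some (Suc k)"
  using assms
proof (induction n)
  case 0 then show ?case by simp
next
  case (Suc n)
  then obtain S where S: "\<forall>s\<ge>S. \<forall>m<n. \<exists>k. eval_steps Xo f s (m # xs) = Some (Suc k)" by auto
  obtain k s0 where "eval_steps Xo f s0 (n # xs) = Some (Suc k)" using Suc.prems by auto
  then have "\<forall>s\<ge>max S s0. \<forall>m<Suc n. \<exists>k. eval_steps Xo f s (m # xs) = Some (Suc k)"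
  proof (intro allI impI)
    fix s m assume a: "max S s0 \<le> s" "m < Suc n"
    show "\<exists>k. eval_steps Xo f s (m # xs) = Some (Suc k)"
    proof (cases "m < n")
      case True then show ?thesis using S a by simp
    next
      case False then have "m = n" using a by simp
      then show ?thesis using eval_steps_mono[OF \<open>eval_steps Xo f s0 (n # xs) = Some (Suc k)\<close>] a by auto
    qed
  qed
  then show ?case by blast
qed

lemma eval_steps_complete: "rf_eval Xo f xs y \<Longrightarrow> \<exists>s. eval_steps Xo f s xs = Some y"
proof (induction rule: rf_eval.induct)
  case (comp xs gs ys f z)
  have "list_all2 (\<lambda>g y. \<exists>s. eval_steps Xo g s xs = Some y) gs ys"
    using comp.IH(1) by (rule list_all2_mono) auto
  then obtain S where S: "\<forall>s\<ge>S. map (\<lambda>g. eval_steps Xo g s xs) gs = map Some ys" using eval_steps_list_eventually by blast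
  obtain s0 where s0: "eval_steps Xo f s0 ys = Some z" using comp.IH(2) by auto
  let ?s = "max S s0"
  have "map (\<lambda>g. eval_steps Xo g ?s xs) gs = map Some ys" using S by simp
  moreover have "eval_steps Xo f ?s ys = Some z" using eval_steps_mono[OF s0] by simp
  ultimately have "eval_steps Xo (RComp f gs) ?s xs = Some z" unfolding eval_steps_RComp Let_def by (simp add: map_map o_def)
  then show ?case by blast
next
  case (prec0 g xs y h)
  then show ?case by auto
next
  case (precS g h n xs y z)
  then obtain s1 s2 where "eval_steps Xo (RPrec g h) s1 (n # xs) = Some y" "eval_steps Xo h s2 (n # y # xs) = Some z" by auto
  then have "eval_steps Xo (RPrec g h) (max s1 s2) (n # xs) = Some y" "eval_steps Xo h (max s1 s2) (n # y # xs) = Some z"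
    using eval_steps_mono max.cobounded1 max.cobounded2 by blast+
  then have "eval_steps Xo (RPrec g h) (max s1 s2) (Suc n # xs) = Some z" by simp
  then show ?case by blast
next
  case (mu f n xs)
  obtain s0 where s0: "eval_steps Xo f s0 (n # xs) = Some 0" using mu by blast
  have "\<forall>m<n. \<exists>k s. eval_steps Xo f s (m # xs) = Some (Suc k)" using mu by blast
  then obtain S where S: "\<forall>s\<ge>S. \<forall>m<n. \<exists>k. eval_steps Xo f s (m # xs) = Some (Suc k)" using eval_steps_positive_eventually by blast
  let ?s = "max (max S s0) n"
  have "mu_search (\<lambda>m. eval_steps Xo f ?s (m # xs)) (Suc ?s) = n + 2"
  proof (rule mu_search_foundI)
    show "n < Suc ?s" by simp
    show "eval_steps Xo f ?s (n # xs) = Some 0" using eval_steps_mono[OF s0] by simp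
    show "\<forall>m<n. \<exists>k. eval_steps Xo f ?s (m # xs) = Some (Suc k)" using S by simp
  qed
  then have "eval_steps Xo (RMu f) ?s xs = Some n" by (simp add: Let_def)
  then show ?case by blast
qed auto

lemma rf_eval_iff_eval_steps: "rf_eval Xo f xs y \<longleftrightarrow> (\<exists>s. eval_steps Xo f s xs = Some y)"
  using eval_steps_complete eval_steps_sound by blast

section \<open>The bounded evaluator is computable\<close>

definition opt_code :: "nat option \<Rightarrow> nat" where
  "opt_code x = (case x of None \<Rightarrow> 0 | Some y \<Rightarrow> Suc y)"

lemma opt_code_simps[simp]: "opt_code None = 0" "opt_code (Some y) = Suc y"
  by (auto simp: opt_code_def)

definition projs_from :: "nat \<Rightarrow> nat \<Rightarrow> (nat list \<Rightarrow> nat) list" where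
  "projs_from a k = map (\<lambda>j l. l ! (j + a)) [0..<k]"

lemma length_projs_from[simp]: "length (projs_from a k) = k"
  by (simp add: projs_from_def)

lemma map_projs_from: "length l = a + k \<Longrightarrow> map (\<lambda>H. H l) (projs_from a k) = drop a l"
  by (rule nth_equalityI) (auto simp: projs_from_def add.commute)

lemma computable_projs_from: "a + k \<le> n \<Longrightarrow> \<forall>H\<in>set (projs_from a k). computable Xo n H"
  by (auto simp: projs_from_def intro!: computable_proj)

lemma opt_code_rec_nat: "opt_code (rec_nat a (\<lambda>i acc. case acc of None \<Rightarrow> None | Some v \<Rightarrow> H i v) n)
   = rec_nat (opt_code a) (\<lambda>i r. if r \<noteq> 0 then opt_code (H i (r - 1)) else 0) n"
proof (induction n)
  case (Suc n)
  show ?case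
  proof (cases "rec_nat a (\<lambda>i acc. case acc of None \<Rightarrow> None | Some v \<Rightarrow> H i v) n")
    case (Some v)
    then have "rec_nat (opt_code a) (\<lambda>i r. if r \<noteq> 0 then opt_code (H i (r - 1)) else 0) n = Suc v"
      using Suc by simp
    then show ?thesis using Some by simp
  qed (use Suc in simp)
qed simp

fun mu_search_code :: "(nat \<Rightarrow> nat) \<Rightarrow> nat \<Rightarrow> nat" where
  "mu_search_code V 0 = 0"
| "mu_search_code V (Suc i) = (if mu_search_code V i \<noteq> 0 then mu_search_code V i
     else if V i = 0 then 1 else if V i = 1 then i + 2 else 0)"

lemma mu_search_eq_code: "mu_search F i = mu_search_code (\<lambda>i. opt_code (F i)) i"
  by (induction i) (auto split: option.splits nat.splits)

text \<open>The step bound is passed as the first argument.\<close>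
definition eval_code :: "nat set \<Rightarrow> rf \<Rightarrow> nat list \<Rightarrow> nat" where
  "eval_code Xo f l = opt_code (eval_steps Xo f (hd l) (tl l))"

lemma eval_code_Cons[simp]: "eval_code Xo f (s # xs) = opt_code (eval_steps Xo f s xs)"
  by (simp add: eval_code_def)

lemma eval_code_RComp:
  "eval_code Xo (RComp f gs) (s # xs) = (if \<forall>g\<in>set gs. eval_code Xo g (s # xs) \<noteq> 0
     then eval_code Xo f (s # map (\<lambda>g. eval_code Xo g (s # xs) - 1) gs) else 0)"
proof (cases "\<forall>g\<in>set gs. eval_code Xo g (s # xs) \<noteq> 0")
  case True
  let ?rs = "map (\<lambda>g. eval_steps Xo g s xs) gs"
  have "None \<notin> set ?rs"
    using True by (auto simp: opt_code_def)
  then have "eval_code Xo (RComp f gs) (s # xs) = opt_code (eval_steps Xo f s (map the ?rs))"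
    by (simp add: eval_steps_RComp Let_def del: map_map)
  also have "map the ?rs = map (\<lambda>g. eval_code Xo g (s # xs) - 1) gs"
    using True by (auto simp: opt_code_def split: option.splits)
  finally show ?thesis using True by simp
next
  case False
  then have "None \<in> set (map (\<lambda>g. eval_steps Xo g s xs) gs)"
    by (force simp: opt_code_def split: option.splits)
  then show ?thesis using False by (auto simp: eval_steps_RComp Let_def)
qed

lemma eval_code_RPrec: "eval_code Xo (RPrec g h) (s # n # ys) =
   rec_nat (eval_code Xo g (s # ys)) (\<lambda>i r. if r \<noteq> 0 then eval_code Xo h (s # i # (r - 1) # ys) else 0) n"
  unfolding eval_code_Cons eval_steps.simps list.case opt_code_rec_nat ..

lemma eval_code_RMu:
  "eval_code Xo (RMu f) (s # xs) = mu_search_code (\<lambda>i. eval_code Xo f (s # i # xs)) (Suc s) - 1"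
proof -
  have "t - 1 = opt_code (if 2 \<le> t then Some (t - 2) else None)" for t :: nat
    by auto
  then show ?thesis by (simp add: Let_def mu_search_eq_code del: mu_search_code.simps)
qed

lemma computable_eval_code_RComp:
  assumes "\<And>k. computable Xo (Suc k) (eval_code Xo f)"
    and "\<And>g k. g \<in> set gs \<Longrightarrow> computable Xo (Suc k) (eval_code Xo g)"
  shows "computable Xo (Suc k) (eval_code Xo (RComp f gs))"
proof -
  let ?Hs = "(\<lambda>l. l ! 0) # map (\<lambda>g l. eval_code Xo g l - 1) gs"
  have "decidable Xo (Suc k) (\<lambda>l. \<forall>g\<in>set gs. eval_code Xo g l \<noteq> 0)"
    using assms(2) by (intro decidable_ball decidable_nonzero)
  moreover have "computable Xo (Suc k) (\<lambda>l. eval_code Xo f (map (\<lambda>H. H l) ?Hs))"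
    using assms by (intro computable_comp) (auto intro: computable_pred[unfolded One_nat_def] computable_proj)
  ultimately have "computable Xo (Suc k) (\<lambda>l. if \<forall>g\<in>set gs. eval_code Xo g l \<noteq> 0
      then eval_code Xo f (map (\<lambda>H. H l) ?Hs) else 0)"
    by (intro computable_If computable_zero)
  then show ?thesis
  proof (rule computable_cong)
    fix l :: "nat list" assume "length l = Suc k"
    then obtain s xs where "l = s # xs" by (cases l) auto
    then show "(if \<forall>g\<in>set gs. eval_code Xo g l \<noteq> 0 then eval_code Xo f (map (\<lambda>H. H l) ?Hs) else 0)
        = eval_code Xo (RComp f gs) l"
      by (auto simp: eval_code_RComp o_def simp del: eval_code_Cons)
  qed
qed

lemma computable_eval_code_RPrec:
  assumes g: "computable Xo (Suc k) (eval_code Xo g)"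
    and h: "computable Xo (Suc (Suc (Suc k))) (eval_code Xo h)"
  shows "computable Xo (Suc (Suc k)) (eval_code Xo (RPrec g h))"
proof -
  \<comment> \<open>the recursion runs over \<open>L = n # s # ys\<close>; the step function sees \<open>i # r # s # ys\<close>\<close>
  define Hh where "Hh = [\<lambda>L. L!2, \<lambda>L. L!0, \<lambda>L. L!1 - 1] @ projs_from 3 k"
  define Fh where "Fh = (\<lambda>L. if L!1 \<noteq> 0 then eval_code Xo h (map (\<lambda>H. H L) Hh) else 0)"
  define R where "R = (\<lambda>L. rec_nat (eval_code Xo g (tl L)) (\<lambda>n r. Fh (n # r # tl L)) (hd L))"
  define Ho where "Ho = [\<lambda>l. l!1, \<lambda>l. l!0] @ projs_from 2 k"
  have "computable Xo (Suc (Suc (Suc k))) (\<lambda>L. eval_code Xo h (map (\<lambda>H. H L) Hh))"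
    using h computable_projs_from[of 3 k "Suc (Suc (Suc k))" Xo]
    by (intro computable_comp) (auto simp: Hh_def intro!: computable_proj computable_pred[unfolded One_nat_def])
  then have "computable Xo (Suc (Suc (Suc k))) Fh"
    unfolding Fh_def by (intro computable_If decidable_nonzero computable_proj computable_zero) auto
  then have "computable Xo (Suc (Suc k)) R"
    unfolding R_def using g by (intro computable_rec_nat)
  then have "computable Xo (Suc (Suc k)) (\<lambda>l. R (map (\<lambda>H. H l) Ho))"
    using computable_projs_from[of 2 k "Suc (Suc k)" Xo]
    by (intro computable_comp) (auto simp: Ho_def intro: computable_proj)
  then show ?thesis
  proof (rule computable_cong)
    fix l :: "nat list" assume "length l = Suc (Suc k)"
    then obtain s n ys where l: "l = s # n # ys" and ys: "length ys = k"
      by (auto simp: length_Suc_conv)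
    have "map (\<lambda>H. H l) Ho = n # s # ys"
      using map_projs_from[of l 2 k] l ys by (simp add: Ho_def)
    moreover have "Fh (i # r # s # ys) = (if r \<noteq> 0 then eval_code Xo h (s # i # (r - 1) # ys) else 0)" for i r
      using map_projs_from[of "i # r # s # ys" 3 k] ys by (simp add: Fh_def Hh_def del: eval_code_Cons)
    ultimately show "R (map (\<lambda>H. H l) Ho) = eval_code Xo (RPrec g h) l"
      using l by (simp add: R_def eval_code_RPrec del: eval_code_Cons)
  qed
qed

lemma computable_eval_code_RMu:
  assumes f: "computable Xo (Suc (Suc k)) (eval_code Xo f)"
  shows "computable Xo (Suc k) (eval_code Xo (RMu f))"
proof -
  \<comment> \<open>the search runs over \<open>L = Suc s # s # xs\<close>; the step function sees \<open>i # st # s # xs\<close>\<close>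
  define Hv where "Hv = [\<lambda>L. L!2, \<lambda>L. L!0] @ projs_from 3 k"
  define V where "V = (\<lambda>L. eval_code Xo f (map (\<lambda>H. H L) Hv))"
  define Fh where "Fh = (\<lambda>L. if L!1 \<noteq> 0 then L!1 else if V L = 0 then 1 else if V L = 1 then L!0 + 2 else 0)"
  define R where "R = (\<lambda>L. rec_nat 0 (\<lambda>n r. Fh (n # r # tl L)) (hd L))"
  define Ho where "Ho = [\<lambda>l. Suc (l!0), \<lambda>l. l!0] @ projs_from 1 k"
  have "computable Xo (Suc (Suc (Suc k))) V"
    unfolding V_def using f computable_projs_from[of 3 k "Suc (Suc (Suc k))" Xo]
    by (intro computable_comp) (auto simp: Hv_def intro: computable_proj)
  then have "computable Xo (Suc (Suc (Suc k))) Fh" unfolding Fh_def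
    by (intro computable_If decidable_nonzero decidable_eq computable_proj computable_const computable_add) auto
  then have "computable Xo (Suc (Suc k)) R"
    unfolding R_def by (rule computable_rec_nat[where Fg = "\<lambda>_. 0", OF computable_zero])
  then have "computable Xo (Suc k) (\<lambda>l. R (map (\<lambda>H. H l) Ho) - 1)"
    using computable_projs_from[of 1 k "Suc k" Xo]
    by (intro computable_pred computable_comp) (auto simp: Ho_def intro: computable_proj computable_Suc)
  then show ?thesis
  proof (rule computable_cong)
    fix l :: "nat list" assume "length l = Suc k"
    then obtain s xs where l: "l = s # xs" and xs: "length xs = k"
      by (auto simp: length_Suc_conv)
    have "map (\<lambda>H. H l) Ho = Suc s # s # xs"
      using map_projs_from[of l 1 k] l xs by (simp add: Ho_def)
    moreover have "V (i # r # s # xs) = eval_code Xo f (s # i # xs)" for i r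
      using map_projs_from[of "i # r # s # xs" 3 k] xs by (simp add: V_def Hv_def del: eval_code_Cons)
    then have "rec_nat 0 (\<lambda>n r. Fh (n # r # s # xs)) i = mu_search_code (\<lambda>i. eval_code Xo f (s # i # xs)) i" for i
      by (induction i) (simp_all add: Fh_def del: eval_code_Cons)
    ultimately show "R (map (\<lambda>H. H l) Ho) - 1 = eval_code Xo (RMu f) l"
      using l by (simp only: R_def list.sel eval_code_RMu)
  qed
qed

lemma computable_eval_code: "computable Xo (Suc k) (eval_code Xo f)"
proof (induction f arbitrary: k)
  case RZero
  show ?case by (rule computable_cong[OF computable_const[of Xo "Suc k" 1]]) (auto simp: length_Suc_conv)
next
  case RSuc
  show ?case
  proof (cases k)
    case 0 then show ?thesis by (intro computable_cong[OF computable_zero]) (auto simp: length_Suc_conv)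
  next
    case (Suc k')
    have "computable Xo (Suc k) (\<lambda>l. Suc (Suc (l ! 1)))" using Suc by (intro computable_Suc computable_proj) simp
    then show ?thesis by (rule computable_cong) (auto simp: Suc length_Suc_conv)
  qed
next
  case (RProj i)
  show ?case
  proof (cases "i < k")
    case False then show ?thesis by (intro computable_cong[OF computable_zero]) (auto simp: length_Suc_conv)
  next
    case True
    have "computable Xo (Suc k) (\<lambda>l. Suc (l ! Suc i))" using True by (intro computable_Suc computable_proj) simp
    then show ?thesis by (rule computable_cong) (use True in \<open>auto simp: length_Suc_conv\<close>)
  qed
next
  case ROrc
  show ?case
  proof (cases k)
    case 0 then show ?thesis by (intro computable_cong[OF computable_zero]) (auto simp: length_Suc_conv)
  next
    case (Suc k')
    have "computable Xo (Suc k) (\<lambda>l. Suc (if l ! 1 \<in> Xo then 1 else 0))"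
      using Suc by (intro computable_Suc computable_oracle computable_proj) simp
    then show ?thesis by (rule computable_cong) (auto simp: Suc length_Suc_conv)
  qed
next
  case (RComp f gs)
  then show ?case by (intro computable_eval_code_RComp)
next
  case (RPrec g h)
  show ?case
  proof (cases k)
    case 0 then show ?thesis by (intro computable_cong[OF computable_zero]) (auto simp: length_Suc_conv)
  next
    case (Suc k')
    then show ?thesis using RPrec by (simp add: computable_eval_code_RPrec)
  qed
next
  case (RMu f)
  then show ?case by (intro computable_eval_code_RMu)
qed

section \<open>Computably enumerable sets in stages\<close>

definition stage_enum :: "nat set \<Rightarrow> (nat \<Rightarrow> nat \<Rightarrow> bool) \<Rightarrow> nat set \<Rightarrow> bool" where
  "stage_enum Xo Q U \<longleftrightarrow> decidable Xo 2 (\<lambda>l. Q (l!0) (l!1)) \<and> (\<forall>n. n \<in> U \<longleftrightarrow> (\<exists>s. Q n s)) \<and>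
     (\<forall>n s s'. Q n s \<longrightarrow> s \<le> s' \<longrightarrow> Q n s')"

lemma ce_in_stage_enum: "ce_in Xo U \<Longrightarrow> \<exists>Q. stage_enum Xo Q U"
proof -
  assume "ce_in Xo U"
  then obtain f where f: "\<forall>n. n \<in> U \<longleftrightarrow> (\<exists>y. rf_eval Xo f [n] y)" unfolding ce_in_def by auto
  define Q where "Q n s \<longleftrightarrow> eval_steps Xo f s [n] \<noteq> None" for n s
  have e2: "computable Xo 2 (eval_code Xo f)" using computable_eval_code[of Xo 1 f] by (simp add: numeral_2_eq_2)
  have "computable Xo 2 (\<lambda>l. eval_code Xo f [l!1, l!0])"
    by (rule computable_comp2[OF e2]) (rule computable_proj, simp)+
  then have "decidable Xo 2 (\<lambda>l. eval_code Xo f [l!1, l!0] \<noteq> 0)" by (rule decidable_nonzero)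
  then have "decidable Xo 2 (\<lambda>l. Q (l!0) (l!1))" by (rule decidable_cong) (auto simp: Q_def opt_code_def split: option.splits)
  moreover have "\<forall>n. n \<in> U \<longleftrightarrow> (\<exists>s. Q n s)" unfolding Q_def
  proof
    fix n
    have "(\<exists>y. rf_eval Xo f [n] y) \<longleftrightarrow> (\<exists>s. eval_steps Xo f s [n] \<noteq> None)" unfolding rf_eval_iff_eval_steps by blast
    then show "n \<in> U \<longleftrightarrow> (\<exists>s. eval_steps Xo f s [n] \<noteq> None)" using f by blast
  qed
  moreover have "\<forall>n s s'. Q n s \<longrightarrow> s \<le> s' \<longrightarrow> Q n s'" unfolding Q_def
  proof (intro allI impI)
    fix n s s' assume "eval_steps Xo f s [n] \<noteq> None" "s \<le> s'"
    then obtain y where "eval_steps Xo f s [n] = Some y" by auto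
    then show "eval_steps Xo f s' [n] \<noteq> None" using eval_steps_mono[OF _ \<open>s \<le> s'\<close>] by simp
  qed
  ultimately show ?thesis unfolding stage_enum_def by blast
qed

lemma stage_enum_Un: "stage_enum Xo Q1 U1 \<Longrightarrow> stage_enum Xo Q2 U2 \<Longrightarrow> stage_enum Xo (\<lambda>n s. Q1 n s \<or> Q2 n s) (U1 \<union> U2)"
proof -
  assume a: "stage_enum Xo Q1 U1" "stage_enum Xo Q2 U2"
  have "decidable Xo 2 (\<lambda>l. Q1 (l!0) (l!1) \<or> Q2 (l!0) (l!1))"
    using a unfolding stage_enum_def by (intro decidable_disj) auto
  moreover have "\<forall>n. n \<in> U1 \<union> U2 \<longleftrightarrow> (\<exists>s. Q1 n s \<or> Q2 n s)" using a unfolding stage_enum_def by blast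
  moreover have "\<forall>n s s'. (Q1 n s \<or> Q2 n s) \<longrightarrow> s \<le> s' \<longrightarrow> (Q1 n s' \<or> Q2 n s')"
    using a unfolding stage_enum_def by blast
  ultimately show ?thesis unfolding stage_enum_def by blast
qed

definition first_stage :: "(nat \<Rightarrow> nat \<Rightarrow> bool) \<Rightarrow> nat \<Rightarrow> nat \<Rightarrow> bool" where
  "first_stage Q n s \<longleftrightarrow> Q n s \<and> (s = 0 \<or> \<not> Q n (s - 1))"

lemma decidable_first_stage:
  assumes "stage_enum Xo Q U" "computable Xo k Fn" "computable Xo k Fs"
  shows "decidable Xo k (\<lambda>l. first_stage Q (Fn l) (Fs l))"
proof -
  have q: "decidable Xo 2 (\<lambda>l. Q (l!0) (l!1))" using assms(1) unfolding stage_enum_def by auto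
  have qh: "\<And>A B. computable Xo k A \<Longrightarrow> computable Xo k B \<Longrightarrow> decidable Xo k (\<lambda>l. Q (A l) (B l))"
  proof -
    fix A B assume "computable Xo k A" "computable Xo k B"
    from computable_comp2[OF q[unfolded decidable_def] this] show "decidable Xo k (\<lambda>l. Q (A l) (B l))" unfolding decidable_def by simp
  qed
  then have "decidable Xo k (\<lambda>l. Q (Fn l) (Fs l) \<and> (Fs l = 0 \<or> \<not> Q (Fn l) (Fs l - 1)))"
    using assms(2,3) by (intro decidable_conj decidable_disj decidable_not decidable_eq computable_const computable_pred qh)
  then show ?thesis unfolding first_stage_def .
qed

lemma first_stage_not_less: "stage_enum Xo Q U \<Longrightarrow> first_stage Q n s \<Longrightarrow> first_stage Q n s' \<Longrightarrow> \<not> s < s'"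
proof
  assume a: "stage_enum Xo Q U" "first_stage Q n s" "first_stage Q n s'" "s < s'"
  have m: "\<forall>n s s'. Q n s \<longrightarrow> s \<le> s' \<longrightarrow> Q n s'" using a(1) unfolding stage_enum_def by blast
  have "Q n s" using a(2) unfolding first_stage_def by blast
  moreover have "s \<le> s' - 1" using a(4) by simp
  ultimately have "Q n (s' - 1)" using m by blast
  then show False using a unfolding first_stage_def by auto
qed

lemma first_stage_unique: "stage_enum Xo Q U \<Longrightarrow> first_stage Q n s \<Longrightarrow> first_stage Q n s' \<Longrightarrow> s = s'"
  using first_stage_not_less[of Xo Q U n s s'] first_stage_not_less[of Xo Q U n s' s] by simp

lemma the_first_stage: "stage_enum Xo Q U \<Longrightarrow> first_stage Q n s \<Longrightarrow> (THE s. first_stage Q n s) = s"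
  using first_stage_unique by blast

lemma first_stage_exists: "stage_enum Xo Q U \<Longrightarrow> n \<in> U \<Longrightarrow> \<exists>s. first_stage Q n s"
proof -
  assume c: "stage_enum Xo Q U" "n \<in> U"
  have u: "\<forall>n. n \<in> U \<longleftrightarrow> (\<exists>s. Q n s)" using c(1) unfolding stage_enum_def by (rule conjunct1[OF conjunct2])
  then obtain s where s: "Q n s" using c(2) by blast
  define m where "m = (LEAST s. Q n s)"
  have "Q n m" unfolding m_def using s by (rule LeastI)
  moreover have "\<not> Q n (m - 1)" if "m \<noteq> 0"
  proof
    assume "Q n (m - 1)"
    then have "m \<le> m - 1" unfolding m_def by (rule Least_le)
    then show False using that by simp
  qed
  ultimately have "first_stage Q n m" unfolding first_stage_def by (cases "m = 0") simp_all
  then show ?thesis by blast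
qed

lemma first_stage_mem: "stage_enum Xo Q U \<Longrightarrow> first_stage Q n s \<Longrightarrow> n \<in> U"
  unfolding stage_enum_def first_stage_def by (meson conjunct1 conjunct2)

section \<open>Abelian \<open>p\<close>-groups and their length\<close>

lemma iso_nat_pow: "h \<in> iso M N \<Longrightarrow> group M \<Longrightarrow> group N \<Longrightarrow> x \<in> carrier M \<Longrightarrow>
  h (x [^]\<^bsub>M\<^esub> (n::nat)) = h x [^]\<^bsub>N\<^esub> n"
  by (rule hom_nat_pow) (auto simp: iso_def)

lemma p_layer_iso:
  assumes "h \<in> iso M N" "group M" "group N"
  shows "h ` p_layer p M k = p_layer p N k"
proof -
  have c: "h ` carrier M = carrier N" using assms(1) by (auto simp: iso_def bij_betw_def)
  have "h ` p_layer p M k = (\<lambda>x. h (x [^]\<^bsub>M\<^esub> (p ^ k))) ` carrier M" unfolding p_layer_def by auto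
  also have "\<dots> = (\<lambda>x. h x [^]\<^bsub>N\<^esub> (p ^ k)) ` carrier M" using iso_nat_pow[OF assms] by (intro image_cong) auto
  also have "\<dots> = (\<lambda>y. y [^]\<^bsub>N\<^esub> (p ^ k)) ` (h ` carrier M)" by (simp add: image_image)
  also have "\<dots> = (\<lambda>y. y [^]\<^bsub>N\<^esub> (p ^ k)) ` carrier N" using c by simp
  finally show ?thesis unfolding p_layer_def .
qed

lemma p_layer_subset: "group M \<Longrightarrow> p_layer p M k \<subseteq> carrier M"
  unfolding p_layer_def using group.is_monoid monoid.nat_pow_closed by fastforce

lemma has_length_iso:
  assumes "h \<in> iso M N" "group M" "group N" "has_length p M n"
  shows "has_length p N n"
proof -
  have inj: "inj_on h (carrier M)" using assms(1) by (auto simp: iso_def bij_betw_def)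
  have eq: "p_layer p N a = p_layer p N b \<longleftrightarrow> p_layer p M a = p_layer p M b" for a b
    using inj_on_image_eq_iff[OF inj p_layer_subset[OF assms(2)] p_layer_subset[OF assms(2)]] p_layer_iso[OF assms(1-3)] by metis
  show ?thesis using assms(4) unfolding has_length_def eq .
qed

lemma abelian_p_group_iso:
  assumes "abelian_p_group p M" "h \<in> iso M N" "group N"
  shows "abelian_p_group p N"
proof -
  have cg: "comm_group M" using assms(1) by (simp add: abelian_p_group_def)
  have gM: "group M" using cg by (simp add: comm_group_def)
  have "M \<cong> N" using assms(2) by (auto simp: is_iso_def)
  then have "comm_group N" using comm_group.iso_imp_comm_group[OF cg] group.is_monoid[OF assms(3)] by blast
  moreover have "\<exists>n. y [^]\<^bsub>N\<^esub> (p ^ n) = \<one>\<^bsub>N\<^esub>" if y: "y \<in> carrier N" for y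
  proof -
    obtain x where x: "x \<in> carrier M" "y = h x" using y assms(2) by (auto simp: iso_def bij_betw_def)
    then obtain n where "x [^]\<^bsub>M\<^esub> (p ^ n) = \<one>\<^bsub>M\<^esub>" using assms(1) by (auto simp: abelian_p_group_def)
    then have "h (x [^]\<^bsub>M\<^esub> (p ^ n)) = \<one>\<^bsub>N\<^esub>"
      using hom_one[of h M N] assms(2,3) gM by (auto simp: iso_def)
    then show ?thesis using iso_nat_pow[OF assms(2) gM assms(3) x(1)] x(2) by auto
  qed
  ultimately show ?thesis unfolding abelian_p_group_def by blast
qed

lemma p_layer_Suc:
  assumes "group B"
  shows "p_layer p B (Suc k) = (\<lambda>y. y [^]\<^bsub>B\<^esub> p) ` p_layer p B k"
proof -
  have "x [^]\<^bsub>B\<^esub> (p ^ Suc k) = (x [^]\<^bsub>B\<^esub> (p ^ k)) [^]\<^bsub>B\<^esub> p" if "x \<in> carrier B" for x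
    using monoid.nat_pow_pow[OF group.is_monoid[OF assms] that] by (simp add: mult.commute)
  then show ?thesis unfolding p_layer_def image_image by (intro image_cong) auto
qed

lemma p_layer_stable:
  assumes "group B" "p_layer p B k = p_layer p B (Suc k)"
  shows "p_layer p B (k + j) = p_layer p B k"
proof (induction j)
  case (Suc j)
  have "p_layer p B (k + Suc j) = (\<lambda>y. y [^]\<^bsub>B\<^esub> p) ` p_layer p B (k + j)"
    using p_layer_Suc[OF assms(1)] by simp
  also have "\<dots> = (\<lambda>y. y [^]\<^bsub>B\<^esub> p) ` p_layer p B k" using Suc by simp
  also have "\<dots> = p_layer p B k" using p_layer_Suc[OF assms(1)] assms(2) by simp
  finally show ?case .
qed simp

lemma p_layer_0:
  assumes "group B"
  shows "p_layer p B 0 = carrier B"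
proof -
  have "x [^]\<^bsub>B\<^esub> (p ^ 0) = x" if "x \<in> carrier B" for x
    using monoid.nat_pow_eone[OF group.is_monoid[OF assms] that] by simp
  then show ?thesis unfolding p_layer_def by (metis (no_types, lifting) image_cong image_ident)
qed

lemma one_in_p_layer: "group B \<Longrightarrow> \<one>\<^bsub>B\<^esub> \<in> p_layer p B k"
  unfolding p_layer_def using group.is_monoid monoid.nat_pow_one monoid.one_closed
  by (metis image_eqI)

lemma nat_pow_prime_power_eq_one_mono:
  fixes p e k :: nat
  assumes mB: "monoid B" and x: "x \<in> carrier B" and e: "x [^]\<^bsub>B\<^esub> (p ^ e) = \<one>\<^bsub>B\<^esub>" and "e \<le> k"
  shows "x [^]\<^bsub>B\<^esub> (p ^ k) = \<one>\<^bsub>B\<^esub>"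
proof -
  have "p ^ k = p ^ e * p ^ (k - e)" using \<open>e \<le> k\<close> by (simp add: power_add[symmetric])
  then have "x [^]\<^bsub>B\<^esub> (p ^ k) = (x [^]\<^bsub>B\<^esub> (p ^ e)) [^]\<^bsub>B\<^esub> (p ^ (k - e))"
    using monoid.nat_pow_pow[OF mB x, of "p ^ e" "p ^ (k - e)"] by argo
  then show ?thesis using e monoid.nat_pow_one[OF mB] by simp
qed

lemma p_layer_eq_one:
  assumes gB: "group B" and e: "\<forall>x\<in>carrier B. x [^]\<^bsub>B\<^esub> (p ^ e) = \<one>\<^bsub>B\<^esub>" and "e \<le> k"
  shows "p_layer p B k = {\<one>\<^bsub>B\<^esub>}"
proof -
  have mB: "monoid B" using gB by (rule group.is_monoid)
  have "x [^]\<^bsub>B\<^esub> (p ^ k) = \<one>\<^bsub>B\<^esub>" if "x \<in> carrier B" for x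
    using nat_pow_prime_power_eq_one_mono[OF mB that] e that \<open>e \<le> k\<close> by blast
  then show ?thesis using monoid.one_closed[OF mB] by (auto simp: p_layer_def)
qed

lemma has_lengthI_exponent:
  assumes gB: "group B" and N: "0 < N" and all: "\<forall>x\<in>carrier B. x [^]\<^bsub>B\<^esub> (p ^ N) = \<one>\<^bsub>B\<^esub>"
    and g: "g \<in> carrier B" "g [^]\<^bsub>B\<^esub> (p ^ (N - 1)) \<noteq> \<one>\<^bsub>B\<^esub>"
  shows "has_length p B N"
proof -
  have mB: "monoid B" using gB by (rule group.is_monoid)
  have lN: "p_layer p B N = {\<one>\<^bsub>B\<^esub>}" "p_layer p B (Suc N) = {\<one>\<^bsub>B\<^esub>}"
    using p_layer_eq_one[OF gB all] by simp_all
  have "p_layer p B k \<noteq> p_layer p B (Suc k)" if k: "k < N" for k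
  proof
    assume "p_layer p B k = p_layer p B (Suc k)"
    then have "p_layer p B k = {\<one>\<^bsub>B\<^esub>}" using p_layer_stable[OF gB, of p k "N - k"] lN k by simp
    then have gk: "g [^]\<^bsub>B\<^esub> (p ^ k) = \<one>\<^bsub>B\<^esub>" using g(1) unfolding p_layer_def by auto
    have "g [^]\<^bsub>B\<^esub> (p ^ (N - 1)) = (g [^]\<^bsub>B\<^esub> (p ^ k)) [^]\<^bsub>B\<^esub> (p ^ (N - 1 - k))"
      using monoid.nat_pow_pow[OF mB g(1)] k by (simp add: power_add[symmetric])
    then show False using gk g(2) monoid.nat_pow_one[OF mB] by simp
  qed
  then show ?thesis unfolding has_length_def using lN by simp
qed

lemma finite_abelian_p_group_exponent:
  assumes ap: "abelian_p_group p B" and fin: "finite (carrier B)"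
  obtains e where "\<forall>x\<in>carrier B. x [^]\<^bsub>B\<^esub> (p ^ e) = \<one>\<^bsub>B\<^esub>"
proof -
  obtain ex where ex: "\<forall>x\<in>carrier B. x [^]\<^bsub>B\<^esub> (p ^ ex x) = \<one>\<^bsub>B\<^esub>"
    using ap unfolding abelian_p_group_def by metis
  have gB: "group B" using ap by (simp add: abelian_p_group_def comm_group_def)
  have "x [^]\<^bsub>B\<^esub> (p ^ Max (ex ` carrier B)) = \<one>\<^bsub>B\<^esub>" if x: "x \<in> carrier B" for x
  proof -
    have "ex x \<le> Max (ex ` carrier B)" using fin x by simp
    then show ?thesis using nat_pow_prime_power_eq_one_mono[OF group.is_monoid[OF gB] x] ex x by blast
  qed
  then show ?thesis using that by blast
qed

lemma p_layer_stable_trivial: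
  assumes ap: "abelian_p_group p B" and fin: "finite (carrier B)"
    and eq: "p_layer p B k = p_layer p B (Suc k)"
  shows "p_layer p B k = {\<one>\<^bsub>B\<^esub>}"
proof -
  have gB: "group B" using ap by (simp add: abelian_p_group_def comm_group_def)
  obtain e where "\<forall>x\<in>carrier B. x [^]\<^bsub>B\<^esub> (p ^ e) = \<one>\<^bsub>B\<^esub>"
    using finite_abelian_p_group_exponent[OF ap fin] .
  then have "p_layer p B (k + e) = {\<one>\<^bsub>B\<^esub>}" by (rule p_layer_eq_one[OF gB]) simp
  then show ?thesis using p_layer_stable[OF gB eq] by simp
qed

lemma has_length_exponentD:
  assumes ap: "abelian_p_group p B" and fin: "finite (carrier B)"
    and hl: "has_length p B N" and nt: "carrier B \<noteq> {\<one>\<^bsub>B\<^esub>}"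
  shows "0 < N \<and> (\<forall>x\<in>carrier B. x [^]\<^bsub>B\<^esub> (p ^ N) = \<one>\<^bsub>B\<^esub>) \<and>
    (\<exists>g\<in>carrier B. g [^]\<^bsub>B\<^esub> (p ^ (N - 1)) \<noteq> \<one>\<^bsub>B\<^esub>)"
proof -
  have gB: "group B" using ap by (simp add: abelian_p_group_def comm_group_def)
  have lN: "p_layer p B N = {\<one>\<^bsub>B\<^esub>}" using p_layer_stable_trivial[OF ap fin] hl by (simp add: has_length_def)
  have l0: "p_layer p B 0 = carrier B" using p_layer_0[OF gB] .
  have N: "0 < N" using lN l0 nt by (cases N) auto
  moreover have "\<forall>x\<in>carrier B. x [^]\<^bsub>B\<^esub> (p ^ N) = \<one>\<^bsub>B\<^esub>" using lN unfolding p_layer_def by auto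
  moreover have "\<exists>g\<in>carrier B. g [^]\<^bsub>B\<^esub> (p ^ (N - 1)) \<noteq> \<one>\<^bsub>B\<^esub>"
  proof (rule ccontr)
    assume "\<not> ?thesis"
    then have "p_layer p B (N - 1) \<subseteq> {\<one>\<^bsub>B\<^esub>}" unfolding p_layer_def by auto
    then have "p_layer p B (N - 1) = p_layer p B (Suc (N - 1))" using lN N one_in_p_layer[OF gB] by auto
    then show False using hl N unfolding has_length_def by (metis diff_less zero_less_one)
  qed
  ultimately show ?thesis by blast
qed

section \<open>Cyclic subgroups and isomorphisms\<close>

lemma nat_int_power[simp]: "nat (int p ^ N) = p ^ N"
  by (metis nat_int of_nat_power)

lemma nat_pow_mod:
  assumes gB: "group B" and g: "g \<in> carrier B" "g [^]\<^bsub>B\<^esub> (n::nat) = \<one>\<^bsub>B\<^esub>"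
  shows "g [^]\<^bsub>B\<^esub> (a::nat) = g [^]\<^bsub>B\<^esub> (a mod n)"
proof -
  have mB: "monoid B" using gB by (rule group.is_monoid)
  have "g [^]\<^bsub>B\<^esub> a = g [^]\<^bsub>B\<^esub> (n * (a div n) + a mod n)" by simp
  also have "\<dots> = (g [^]\<^bsub>B\<^esub> n) [^]\<^bsub>B\<^esub> (a div n) \<otimes>\<^bsub>B\<^esub> g [^]\<^bsub>B\<^esub> (a mod n)"
    using monoid.nat_pow_mult[OF mB g(1)] monoid.nat_pow_pow[OF mB g(1)] by simp
  also have "\<dots> = g [^]\<^bsub>B\<^esub> (a mod n)"
    using g mB monoid.l_one[OF mB monoid.nat_pow_closed[OF mB g(1)]] by (simp add: monoid.nat_pow_one)
  finally show ?thesis .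
qed

lemma ord_eq_prime_power:
  assumes gB: "group B" and p: "Factorial_Ring.prime p" and N: "0 < N" and g: "g \<in> carrier B"
    "g [^]\<^bsub>B\<^esub> (p ^ N) = \<one>\<^bsub>B\<^esub>" "g [^]\<^bsub>B\<^esub> (p ^ (N - 1)) \<noteq> \<one>\<^bsub>B\<^esub>"
  shows "group.ord B g = p ^ N"
proof -
  have "group.ord B g dvd p ^ N" using group.pow_eq_id[OF gB g(1)] g(2) by simp
  then obtain i where i: "i \<le> N" "group.ord B g = p ^ i" using divides_primepow_nat[OF p] by blast
  have "\<not> i < N"
  proof
    assume "i < N"
    then have "p ^ i dvd p ^ (N - 1)" by (intro le_imp_power_dvd) simp
    then have "g [^]\<^bsub>B\<^esub> (p ^ (N - 1)) = \<one>\<^bsub>B\<^esub>" using group.pow_eq_id[OF gB g(1)] i(2) by simp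
    then show False using g(3) by simp
  qed
  then show ?thesis using i by simp
qed

text \<open>The carrier of \<open>integer_mod_group (p ^ N)\<close> is \<open>{0..<p ^ N}\<close>, as integers.\<close>
definition cyclic_pow :: "('a, 'b) monoid_scheme \<Rightarrow> 'a \<Rightarrow> int \<Rightarrow> 'a" where
  "cyclic_pow B g i = g [^]\<^bsub>B\<^esub> (nat i)"

lemma carrier_integer_mod_group_prime_power:
  "Factorial_Ring.prime p \<Longrightarrow> carrier (integer_mod_group (p ^ N)) = {0..<int (p ^ N)}"
  by (simp add: carrier_integer_mod_group prime_gt_0_nat)

lemma cyclic_pow_hom:
  assumes gB: "group B" and p: "Factorial_Ring.prime p" and g: "g \<in> carrier B" "g [^]\<^bsub>B\<^esub> (p ^ N) = \<one>\<^bsub>B\<^esub>"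
  shows "cyclic_pow B g \<in> hom (integer_mod_group (p ^ N)) B"
  unfolding hom_def
proof (intro CollectI conjI ballI)
  have mB: "monoid B" using gB by (rule group.is_monoid)
  show "cyclic_pow B g \<in> carrier (integer_mod_group (p ^ N)) \<rightarrow> carrier B"
    using g(1) mB by (auto simp: cyclic_pow_def monoid.nat_pow_closed)
  fix x y assume "x \<in> carrier (integer_mod_group (p ^ N))" "y \<in> carrier (integer_mod_group (p ^ N))"
  then have "0 \<le> x" "0 \<le> y" using carrier_integer_mod_group_prime_power[OF p] by auto
  then have "nat ((x + y) mod int (p ^ N)) = (nat x + nat y) mod (p ^ N)"
    by (simp add: nat_mod_distrib nat_add_distrib)
  then have "cyclic_pow B g ((x + y) mod int (p ^ N)) = g [^]\<^bsub>B\<^esub> (nat x + nat y)"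
    unfolding cyclic_pow_def using nat_pow_mod[OF gB g] by simp
  also have "\<dots> = cyclic_pow B g x \<otimes>\<^bsub>B\<^esub> cyclic_pow B g y"
    unfolding cyclic_pow_def using monoid.nat_pow_mult[OF mB g(1)] by simp
  finally show "cyclic_pow B g (x \<otimes>\<^bsub>integer_mod_group (p ^ N)\<^esub> y) = cyclic_pow B g x \<otimes>\<^bsub>B\<^esub> cyclic_pow B g y"
    by simp
qed

lemma cyclic_pow_inj:
  assumes gB: "group B" and p: "Factorial_Ring.prime p" and N: "0 < N" and g: "g \<in> carrier B"
    "g [^]\<^bsub>B\<^esub> (p ^ N) = \<one>\<^bsub>B\<^esub>" "g [^]\<^bsub>B\<^esub> (p ^ (N - 1)) \<noteq> \<one>\<^bsub>B\<^esub>"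
  shows "inj_on (cyclic_pow B g) (carrier (integer_mod_group (p ^ N)))"
proof (rule inj_onI)
  have inj: "inj_on (\<lambda>x. g [^]\<^bsub>B\<^esub> (x::nat)) {0..p ^ N - 1}"
    using group.ord_inj[OF gB g(1)] ord_eq_prime_power[OF assms] by simp
  fix x y assume "x \<in> carrier (integer_mod_group (p ^ N))" "y \<in> carrier (integer_mod_group (p ^ N))"
    and e: "cyclic_pow B g x = cyclic_pow B g y"
  then have xy: "0 \<le> x" "0 \<le> y" "nat x < p ^ N" "nat y < p ^ N"
    using carrier_integer_mod_group_prime_power[OF p] by (auto simp: nat_less_iff)
  moreover have "g [^]\<^bsub>B\<^esub> nat x = g [^]\<^bsub>B\<^esub> nat y" using e unfolding cyclic_pow_def .
  ultimately have "nat x = nat y" using inj_onD[OF inj] by simp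
  then show "x = y" using xy by simp
qed

lemma cyclic_pow_iso:
  assumes gB: "group B" and p: "Factorial_Ring.prime p" and N: "0 < N" and g: "g \<in> carrier B"
    "g [^]\<^bsub>B\<^esub> (p ^ N) = \<one>\<^bsub>B\<^esub>" "g [^]\<^bsub>B\<^esub> (p ^ (N - 1)) \<noteq> \<one>\<^bsub>B\<^esub>"
  defines "H \<equiv> cyclic_pow B g ` carrier (integer_mod_group (p ^ N))"
  shows "subgroup H B" "cyclic_pow B g \<in> iso (integer_mod_group (p ^ N)) (B\<lparr>carrier := H\<rparr>)"
    "card H = p ^ N"
proof -
  have h: "cyclic_pow B g \<in> hom (integer_mod_group (p ^ N)) B" and i: "inj_on (cyclic_pow B g) (carrier (integer_mod_group (p ^ N)))"
    using cyclic_pow_hom[OF gB p g(1,2)] cyclic_pow_inj[OF assms(1-6)] by auto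
  have gh: "group_hom (integer_mod_group (p ^ N)) B (cyclic_pow B g)"
    using h gB by (simp add: group_hom_def group_hom_axioms_def)
  show "subgroup H B" unfolding H_def by (rule group_hom.img_is_subgroup[OF gh])
  show "cyclic_pow B g \<in> iso (integer_mod_group (p ^ N)) (B\<lparr>carrier := H\<rparr>)"
    using h i unfolding iso_def hom_def H_def bij_betw_def by auto
  have pN: "0 < p ^ N" using p by (simp add: prime_gt_0_nat)
  show "card H = p ^ N" unfolding H_def using card_image[OF i] pN by (simp add: carrier_integer_mod_group)
qed

lemma DirProd_nat_pow:
  assumes "monoid A" "monoid B" "x \<in> carrier A" "y \<in> carrier B"
  shows "(x, y) [^]\<^bsub>A \<times>\<times> B\<^esub> (n::nat) = (x [^]\<^bsub>A\<^esub> n, y [^]\<^bsub>B\<^esub> n)"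
proof (induction n)
  case 0 then show ?case using DirProd_monoid[OF assms(1,2)] by (simp add: monoid.nat_pow_0 assms)
next
  case (Suc n) then show ?case using DirProd_monoid[OF assms(1,2)] assms by (simp add: monoid.nat_pow_Suc)
qed

lemma comm_group_subgroup: "comm_group M \<Longrightarrow> subgroup D M \<Longrightarrow> comm_group (M\<lparr>carrier := D\<rparr>)"
  by (rule group.group_comm_groupI)
     (auto simp: comm_group_def subgroup.subgroup_is_group comm_monoid.m_comm subgroup.mem_carrier)

lemma subgroup_abelian_p_group_has_length:
  assumes cM: "comm_group M" and D: "subgroup D M" and N: "0 < N"
    and all: "\<forall>x\<in>carrier M. x [^]\<^bsub>M\<^esub> (p ^ N) = \<one>\<^bsub>M\<^esub>"
    and g: "g \<in> D" "g [^]\<^bsub>M\<^esub> (p ^ (N - 1)) \<noteq> \<one>\<^bsub>M\<^esub>"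
  shows "abelian_p_group p (M\<lparr>carrier := D\<rparr>)" "has_length p (M\<lparr>carrier := D\<rparr>) N"
proof -
  have gM: "group M" using cM by (simp add: comm_group_def)
  have mM: "monoid M" using gM by (rule group.is_monoid)
  have cD: "comm_group (M\<lparr>carrier := D\<rparr>)" by (rule comm_group_subgroup[OF cM D])
  have gD: "group (M\<lparr>carrier := D\<rparr>)" using cD by (simp add: comm_group_def)
  have pw: "x [^]\<^bsub>M\<lparr>carrier := D\<rparr>\<^esub> (n::nat) = x [^]\<^bsub>M\<^esub> n" for x n
    using monoid.nat_pow_consistent[OF mM] by simp
  have sub: "D \<subseteq> carrier M" using D by (rule subgroup.subset)
  show "abelian_p_group p (M\<lparr>carrier := D\<rparr>)"
    unfolding abelian_p_group_def using cD all sub pw by auto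
  show "has_length p (M\<lparr>carrier := D\<rparr>) N"
    by (rule has_lengthI_exponent[OF gD N]) (use all sub pw g in auto)
qed

lemma first_factor_subgroup:
  assumes gC: "group C" and D: "subgroup D C"
  shows "subgroup (D \<times> {\<one>\<^bsub>C\<^esub>}) (C \<times>\<times> C)" "C\<lparr>carrier := D\<rparr> \<cong> (C \<times>\<times> C)\<lparr>carrier := D \<times> {\<one>\<^bsub>C\<^esub>}\<rparr>"
proof -
  show "subgroup (D \<times> {\<one>\<^bsub>C\<^esub>}) (C \<times>\<times> C)"
    using DirProd_subgroups[OF gC D gC group.triv_subgroup[OF gC]] by simp
  have "\<one>\<^bsub>C\<^esub> \<otimes>\<^bsub>C\<^esub> \<one>\<^bsub>C\<^esub> = \<one>\<^bsub>C\<^esub>" using gC by (simp add: group.is_monoid monoid.l_one monoid.one_closed)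
  then have "(\<lambda>x. (x, \<one>\<^bsub>C\<^esub>)) \<in> iso (C\<lparr>carrier := D\<rparr>) ((C \<times>\<times> C)\<lparr>carrier := D \<times> {\<one>\<^bsub>C\<^esub>}\<rparr>)"
    unfolding iso_def hom_def bij_betw_def inj_on_def by auto
  then show "C\<lparr>carrier := D\<rparr> \<cong> (C \<times>\<times> C)\<lparr>carrier := D \<times> {\<one>\<^bsub>C\<^esub>}\<rparr>" by (rule is_isoI)
qed

lemma iso_restrict:
  assumes "b \<in> iso M G" "D \<subseteq> carrier M"
  shows "b \<in> iso (M\<lparr>carrier := D\<rparr>) (G\<lparr>carrier := b ` D\<rparr>)"
  using assms unfolding iso_def hom_def bij_betw_def by (auto intro: inj_on_subset) (meson subsetD)

lemma ex_iso_nat_carrier: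
  assumes gM: "group M" and fin: "finite (carrier M)"
  shows "\<exists>b (G :: nat monoid). b \<in> iso M G \<and> carrier G = {0..<card (carrier M)} \<and> group G"
proof -
  obtain b where b: "bij_betw b (carrier M) {0..<card (carrier M)}" using ex_bij_betw_finite_nat[OF fin] by blast
  define G :: "nat monoid" where "G = \<lparr>carrier = {0..<card (carrier M)},
    monoid.mult = (\<lambda>x y. b (inv_into (carrier M) b x \<otimes>\<^bsub>M\<^esub> inv_into (carrier M) b y)), one = b \<one>\<^bsub>M\<^esub>\<rparr>"
  have inj: "inj_on b (carrier M)" using b by (simp add: bij_betw_def)
  have "b \<in> hom M G" unfolding hom_def
  proof (intro CollectI conjI ballI)
    show "b \<in> carrier M \<rightarrow> carrier G" using b by (auto simp: G_def bij_betw_def)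
    fix x y assume "x \<in> carrier M" "y \<in> carrier M"
    then show "b (x \<otimes>\<^bsub>M\<^esub> y) = b x \<otimes>\<^bsub>G\<^esub> b y" using inj by (simp add: G_def inv_into_f_f)
  qed
  then have bi: "b \<in> iso M G" using b by (simp add: iso_def G_def)
  have "group (G\<lparr>one := b \<one>\<^bsub>M\<^esub>\<rparr>)" by (rule group.iso_imp_img_group[OF gM bi])
  moreover have "G\<lparr>one := b \<one>\<^bsub>M\<^esub>\<rparr> = G" by (simp add: G_def)
  ultimately show ?thesis using bi by (intro exI[of _ b] exI[of _ G]) (simp add: G_def)
qed

lemma integer_mod_group_iso_if_card_le:
  assumes p: "Factorial_Ring.prime p" and ap: "abelian_p_group p M" and hl: "has_length p M N"
    and N: "0 < N" and fin: "finite (carrier M)" and card: "card (carrier M) \<le> p ^ N"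
  shows "integer_mod_group (p ^ N) \<cong> M"
proof -
  have gM: "group M" using ap by (simp add: abelian_p_group_def comm_group_def)
  have "carrier M \<noteq> {\<one>\<^bsub>M\<^esub>}"
  proof
    assume "carrier M = {\<one>\<^bsub>M\<^esub>}"
    then have "p_layer p M k = {\<one>\<^bsub>M\<^esub>}" for k
      unfolding p_layer_def using monoid.nat_pow_one[OF group.is_monoid[OF gM]] by simp
    then show False using hl N unfolding has_length_def by auto
  qed
  then obtain g where g: "g \<in> carrier M" "g [^]\<^bsub>M\<^esub> (p ^ (N - 1)) \<noteq> \<one>\<^bsub>M\<^esub>"
    and gN: "g [^]\<^bsub>M\<^esub> (p ^ N) = \<one>\<^bsub>M\<^esub>"
    using has_length_exponentD[OF ap fin hl] by blast
  define H where "H = cyclic_pow M g ` carrier (integer_mod_group (p ^ N))"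
  have H: "subgroup H M" and Hi: "cyclic_pow M g \<in> iso (integer_mod_group (p ^ N)) (M\<lparr>carrier := H\<rparr>)"
    and cardH: "card H = p ^ N"
    using cyclic_pow_iso[OF gM p N g(1) gN g(2)] unfolding H_def by auto
  have sub: "H \<subseteq> carrier M" using H by (rule subgroup.subset)
  then have "card H = card (carrier M)" using card_mono[OF fin sub] card cardH by simp
  then have "H = carrier M" using card_subset_eq[OF fin sub] by simp
  then show ?thesis using Hi unfolding is_iso_def by auto
qed

section \<open>A uniformly computable sequence of growing subgroups\<close>

locale staged_subgroups =
  fixes Xo :: "nat set" and G :: "nat monoid" and m :: nat and A K :: "nat set"
    and Qu Qv :: "nat \<Rightarrow> nat \<Rightarrow> bool" and U V :: "nat set"
  assumes group_G: "group G" and carrier_G: "carrier G = {0..<m}"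
    and subA: "subgroup A G" and subK: "subgroup K G" and AK: "A \<subseteq> K"
    and cu: "stage_enum Xo Qu U" and cv: "stage_enum Xo Qv V" and VU: "V \<subseteq> U"
begin

lemma m_pos: "0 < m"
  using monoid.one_closed[OF group.is_monoid[OF group_G]] carrier_G by auto

text \<open>An element of \<open>K - A\<close> (outside \<open>K\<close>) is tagged with one
  plus the stage at which \<open>n\<close> entered \<open>U\<close> (\<open>V\<close>); the \<open>THE\<close> is junk unless that stage
  exists, i.e.\ unless the element lies in \<open>stage_subgroup n\<close>.\<close>
definition stage_tag :: "nat \<Rightarrow> nat \<Rightarrow> nat" where
  "stage_tag n x = (if x \<in> A then 0 else if x \<in> K then Suc (THE s. first_stage Qu n s)
     else Suc (THE s. first_stage Qv n s))"

definition encode :: "nat \<Rightarrow> nat \<Rightarrow> nat" where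
  "encode n x = x + m * stage_tag n x"

definition stage_subgroup :: "nat \<Rightarrow> nat set" where
  "stage_subgroup n = (if n \<in> V then carrier G else if n \<in> U then K else A)"

text \<open>A number \<open>a\<close> decodes to \<open>a mod m\<close>; deciding membership only requires checking that \<open>n\<close>
  was first enumerated exactly at stage \<open>a div m - 1\<close>.\<close>
definition staged_group :: "nat \<Rightarrow> nat monoid" where
  "staged_group n = \<lparr>carrier = encode n ` stage_subgroup n,
     monoid.mult = (\<lambda>a b. encode n ((a mod m) \<otimes>\<^bsub>G\<^esub> (b mod m))), one = \<one>\<^bsub>G\<^esub>\<rparr>"

lemma encode_mod: "x < m \<Longrightarrow> encode n x mod m = x"
  by (simp add: encode_def)

lemma encode_div: "x < m \<Longrightarrow> encode n x div m = stage_tag n x"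
  using m_pos by (simp add: encode_def)

lemma subgroup_stage_subgroup: "subgroup (stage_subgroup n) G"
  unfolding stage_subgroup_def using subA subK group.subgroup_self[OF group_G] by auto

lemma stage_subgroup_less: "x \<in> stage_subgroup n \<Longrightarrow> x < m"
  using subgroup.subset[OF subgroup_stage_subgroup] carrier_G by fastforce

lemma staged_group_carrier_imp:
  assumes "a \<in> carrier (staged_group n)"
  shows "(a mod m \<in> A \<and> a div m = 0) \<or>
   (a mod m \<in> K \<and> a mod m \<notin> A \<and> a div m \<noteq> 0 \<and> first_stage Qu n (a div m - 1)) \<or>
   (a mod m \<notin> K \<and> a div m \<noteq> 0 \<and> first_stage Qv n (a div m - 1))"
proof -
  obtain x where x: "x \<in> stage_subgroup n" and a: "a = encode n x"
    using assms by (auto simp: staged_group_def)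
  have am: "a mod m = x" "a div m = stage_tag n x"
    using a encode_mod encode_div stage_subgroup_less[OF x] by auto
  consider "x \<in> A" | "x \<in> K" "x \<notin> A" | "x \<notin> K" by blast
  then show ?thesis
  proof cases
    case 2
    then have "n \<in> U" using x VU by (auto simp: stage_subgroup_def split: if_splits)
    then obtain s where "first_stage Qu n s" using first_stage_exists[OF cu] by blast
    then show ?thesis using am 2 the_first_stage[OF cu] by (simp add: stage_tag_def)
  next
    case 3
    then have "n \<in> V" using x AK by (auto simp: stage_subgroup_def split: if_splits)
    then obtain s where "first_stage Qv n s" using first_stage_exists[OF cv] by blast
    then show ?thesis using am 3 AK the_first_stage[OF cv] by (auto simp: stage_tag_def)
  qed (use am in \<open>simp add: stage_tag_def\<close>)
qed

lemma staged_group_carrier_if: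
  assumes "(a mod m \<in> A \<and> a div m = 0) \<or>
   (a mod m \<in> K \<and> a mod m \<notin> A \<and> a div m \<noteq> 0 \<and> first_stage Qu n (a div m - 1)) \<or>
   (a mod m \<notin> K \<and> a div m \<noteq> 0 \<and> first_stage Qv n (a div m - 1))"
  shows "a \<in> carrier (staged_group n)"
proof -
  define x where "x = a mod m"
  have xm: "x < m" using m_pos by (simp add: x_def)
  have a: "a = x + m * (a div m)" by (simp add: x_def)
  have "a = encode n x \<and> x \<in> stage_subgroup n"
    using assms unfolding x_def[symmetric]
  proof (elim disjE conjE)
    assume "x \<in> A" "a div m = 0"
    then show ?thesis using a AK subgroup.subset[OF subK] carrier_G xm
      by (auto simp: encode_def stage_tag_def stage_subgroup_def)
  next
    assume "x \<in> K" "x \<notin> A" "a div m \<noteq> 0" and s: "first_stage Qu n (a div m - 1)"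
    moreover have "n \<in> U" using first_stage_mem[OF cu s] .
    ultimately show ?thesis using a carrier_G xm the_first_stage[OF cu s]
      by (auto simp: encode_def stage_tag_def stage_subgroup_def)
  next
    assume "x \<notin> K" "a div m \<noteq> 0" and s: "first_stage Qv n (a div m - 1)"
    moreover have "n \<in> V" using first_stage_mem[OF cv s] .
    ultimately show ?thesis using a carrier_G xm AK the_first_stage[OF cv s]
      by (auto simp: encode_def stage_tag_def stage_subgroup_def)
  qed
  then show ?thesis by (auto simp: staged_group_def)
qed

lemma staged_group_carrier_decode: "a \<in> carrier (staged_group n) \<Longrightarrow> a mod m \<in> stage_subgroup n \<and> a = encode n (a mod m)"
  by (auto simp: staged_group_def encode_mod stage_subgroup_less)

lemma encode_inj: "x < m \<Longrightarrow> y < m \<Longrightarrow> encode n x = encode n y \<Longrightarrow> x = y"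
  by (metis encode_mod)

lemma stage_subgroup_carrier: "x \<in> stage_subgroup n \<Longrightarrow> x \<in> carrier G"
  using subgroup.subset[OF subgroup_stage_subgroup] by blast

lemma staged_group_mult_iff:
  assumes "a \<in> carrier (staged_group n)" "b \<in> carrier (staged_group n)" "c \<in> carrier (staged_group n)"
  shows "a \<otimes>\<^bsub>staged_group n\<^esub> b = c \<longleftrightarrow> (a mod m) \<otimes>\<^bsub>G\<^esub> (b mod m) = c mod m"
proof -
  have x: "a mod m \<in> carrier G" "b mod m \<in> carrier G" and c: "c = encode n (c mod m)" "c mod m < m"
    using staged_group_carrier_decode[OF assms(1)] staged_group_carrier_decode[OF assms(2)] staged_group_carrier_decode[OF assms(3)] stage_subgroup_carrier stage_subgroup_less by auto
  have p: "(a mod m) \<otimes>\<^bsub>G\<^esub> (b mod m) < m" using monoid.m_closed[OF group.is_monoid[OF group_G] x] carrier_G by auto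
  have "a \<otimes>\<^bsub>staged_group n\<^esub> b = encode n ((a mod m) \<otimes>\<^bsub>G\<^esub> (b mod m))" by (simp add: staged_group_def)
  moreover have "encode n ((a mod m) \<otimes>\<^bsub>G\<^esub> (b mod m)) = c \<longleftrightarrow> (a mod m) \<otimes>\<^bsub>G\<^esub> (b mod m) = c mod m"
  proof
    assume "encode n ((a mod m) \<otimes>\<^bsub>G\<^esub> (b mod m)) = c"
    then have "encode n ((a mod m) \<otimes>\<^bsub>G\<^esub> (b mod m)) = encode n (c mod m)" using c(1) by simp
    then show "(a mod m) \<otimes>\<^bsub>G\<^esub> (b mod m) = c mod m" using encode_inj[OF p c(2)] by blast
  next
    assume "(a mod m) \<otimes>\<^bsub>G\<^esub> (b mod m) = c mod m"
    then show "encode n ((a mod m) \<otimes>\<^bsub>G\<^esub> (b mod m)) = c" using c(1) by simp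
  qed
  ultimately show ?thesis by simp
qed

lemma decidable_staged_carrier: "computable Xo k Fn \<Longrightarrow> computable Xo k Fa \<Longrightarrow> decidable Xo k (\<lambda>l. Fa l \<in> carrier (staged_group (Fn l)))"
proof -
  assume n: "computable Xo k Fn" and a: "computable Xo k Fa"
  have fA: "finite A" and fK: "finite K" using subgroup.subset[OF subA] subgroup.subset[OF subK] carrier_G
    by (auto intro: finite_subset)
  have amod: "computable Xo k (\<lambda>l. Fa l mod m)" and adiv: "computable Xo k (\<lambda>l. Fa l div m)"
    using computable_mod[OF m_pos a] computable_div[OF m_pos a] .
  have "decidable Xo k (\<lambda>l. (Fa l mod m \<in> A \<and> Fa l div m = 0) \<or>
   (Fa l mod m \<in> K \<and> \<not> Fa l mod m \<in> A \<and> \<not> Fa l div m = 0 \<and> first_stage Qu (Fn l) (Fa l div m - 1)) \<or>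
   (\<not> Fa l mod m \<in> K \<and> \<not> Fa l div m = 0 \<and> first_stage Qv (Fn l) (Fa l div m - 1)))"
    by (intro decidable_disj decidable_conj decidable_not decidable_mem_finite fA fK amod decidable_eq adiv computable_const decidable_first_stage[OF cu] decidable_first_stage[OF cv] n computable_pred)
  then show ?thesis by (rule decidable_cong) (use staged_group_carrier_imp staged_group_carrier_if in blast)
qed

lemma decidable_staged_mult: "decidable Xo 4 (\<lambda>l. l!1 \<in> carrier (staged_group (l!0)) \<and>
   l!2 \<in> carrier (staged_group (l!0)) \<and> l!3 \<in> carrier (staged_group (l!0)) \<and>
   l!1 \<otimes>\<^bsub>staged_group (l!0)\<^esub> l!2 = l!3)"
proof -
  have p: "computable Xo 4 (\<lambda>l. l!i)" if "i < 4" for i using that by (rule computable_proj)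
  have "decidable Xo 4 (\<lambda>l. l!1 \<in> carrier (staged_group (l!0)) \<and>
     l!2 \<in> carrier (staged_group (l!0)) \<and> l!3 \<in> carrier (staged_group (l!0)) \<and>
     (if l!1 mod m < m \<and> l!2 mod m < m then (l!1 mod m) \<otimes>\<^bsub>G\<^esub> (l!2 mod m) else 0) = l!3 mod m)"
    by (intro decidable_conj decidable_staged_carrier decidable_eq computable_table
        computable_mod[OF m_pos] p) simp_all
  then show ?thesis
    by (rule decidable_cong) (use m_pos staged_group_mult_iff in auto)
qed

lemma decidable_staged_one: "decidable Xo 2 (\<lambda>l. l!1 = \<one>\<^bsub>staged_group (l!0)\<^esub>)"
proof -
  have "decidable Xo 2 (\<lambda>l. l!1 = \<one>\<^bsub>G\<^esub>)" by (intro decidable_eq computable_proj computable_const) simp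
  then show ?thesis by (rule decidable_cong) (simp add: staged_group_def)
qed

lemma staged_group_unif_computable: "unif_computable_seq Xo staged_group"
proof -
  have c1: "decidable Xo 2 (\<lambda>l. l!1 \<in> carrier (staged_group (l!0)))" by (intro decidable_staged_carrier computable_proj) simp_all
  show ?thesis unfolding unif_computable_seq_def
    using decidable2_rf_eval[OF c1] decidable2_rf_eval[OF decidable_staged_one] decidable4_rf_eval[OF decidable_staged_mult] by simp
qed

lemma encode_one: "encode n \<one>\<^bsub>G\<^esub> = \<one>\<^bsub>G\<^esub>"
  using subgroup.one_closed[OF subA] by (simp add: encode_def stage_tag_def)

lemma encode_iso: "encode n \<in> iso (G\<lparr>carrier := stage_subgroup n\<rparr>) (staged_group n)"
proof -
  have bij: "bij_betw (encode n) (stage_subgroup n) (encode n ` stage_subgroup n)"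
    by (rule inj_on_imp_bij_betw) (meson stage_subgroup_less encode_inj inj_onI)
  have "encode n (x \<otimes>\<^bsub>G\<^esub> y) = encode n x \<otimes>\<^bsub>staged_group n\<^esub> encode n y" if "x \<in> stage_subgroup n" "y \<in> stage_subgroup n" for x y
    using that by (simp add: staged_group_def encode_mod stage_subgroup_less)
  moreover have "encode n x \<in> carrier (staged_group n)" if "x \<in> stage_subgroup n" for x using that by (simp add: staged_group_def)
  ultimately show ?thesis using bij unfolding iso_def hom_def by (auto simp: staged_group_def)
qed

lemma group_staged_group: "group (staged_group n)"
proof -
  have "group (G\<lparr>carrier := stage_subgroup n\<rparr>)"
    using subgroup.subgroup_is_group[OF subgroup_stage_subgroup group_G] .
  then have "group ((staged_group n)\<lparr>one := encode n \<one>\<^bsub>G\<^esub>\<rparr>)"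
    using group.iso_imp_img_group[OF _ encode_iso] by simp
  then show ?thesis using encode_one by (simp add: staged_group_def)
qed

end

lemma unif_computable_staged_subgroups:
  assumes gM: "group M" and fin: "finite (carrier M)" and SA: "subgroup DA M" and SK: "subgroup DK M"
    and AK: "DA \<subseteq> DK" and cu: "stage_enum Xo Qu U" and cv: "stage_enum Xo Qv V" and VU: "V \<subseteq> U"
  shows "\<exists>Cs :: nat \<Rightarrow> nat monoid. unif_computable_seq Xo Cs \<and> (\<forall>n. group (Cs n)) \<and>
    (\<forall>n. M\<lparr>carrier := (if n \<in> V then carrier M else if n \<in> U then DK else DA)\<rparr> \<cong> Cs n)"
proof -
  obtain b and G :: "nat monoid" where b: "b \<in> iso M G" and cG: "carrier G = {0..<card (carrier M)}"
    and gG: "group G"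
    using ex_iso_nat_carrier[OF gM fin] by blast
  interpret S: staged_subgroups Xo G "card (carrier M)" "b ` DA" "b ` DK" Qu Qv U V
    using subgroup.iso_subgroup[OF SA gM gG b] subgroup.iso_subgroup[OF SK gM gG b] image_mono[OF AK]
    by (intro staged_subgroups.intro gG cG cu cv VU)
  define D where "D n = (if n \<in> V then carrier M else if n \<in> U then DK else DA)" for n
  have "S.stage_subgroup n = b ` D n" for n
    using b unfolding S.stage_subgroup_def D_def by (simp add: iso_def bij_betw_def)
  moreover have "b \<in> iso (M\<lparr>carrier := D n\<rparr>) (G\<lparr>carrier := b ` D n\<rparr>)" for n
    using SA SK group.subgroup_self[OF gM] by (intro iso_restrict[OF b]) (auto simp: D_def subgroup.subset)
  ultimately have "M\<lparr>carrier := D n\<rparr> \<cong> S.staged_group n" for n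
    using S.encode_iso by (metis is_isoI iso_trans)
  then show ?thesis using S.staged_group_unif_computable S.group_staged_group unfolding D_def by blast
qed

section \<open>Scott sentences\<close>

fun ex_block :: "nat \<Rightarrow> fm \<Rightarrow> fm" where
  "ex_block 0 \<phi> = \<phi>" | "ex_block (Suc k) \<phi> = FEx k (ex_block k \<phi>)"

fun all_block :: "nat \<Rightarrow> fm \<Rightarrow> fm" where
  "all_block 0 \<phi> = \<phi>" | "all_block (Suc k) \<phi> = FAll k (all_block k \<phi>)"

fun conj_list :: "fm list \<Rightarrow> fm" where
  "conj_list [] = FEq TOne TOne" | "conj_list (\<phi> # \<phi>s) = FAnd \<phi> (conj_list \<phi>s)"

fun disj_list :: "fm list \<Rightarrow> fm" where
  "disj_list [] = FNot (FEq TOne TOne)" | "disj_list (\<phi> # \<phi>s) = FOr \<phi> (disj_list \<phi>s)"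

lemma sat_conj_list: "sat M e (conj_list \<phi>s) \<longleftrightarrow> (\<forall>\<phi>\<in>set \<phi>s. sat M e \<phi>)"
  by (induction \<phi>s) auto

lemma sat_disj_list: "sat M e (disj_list \<phi>s) \<longleftrightarrow> (\<exists>\<phi>\<in>set \<phi>s. sat M e \<phi>)"
  by (induction \<phi>s) auto

lemma qfree_conj_list: "\<forall>\<phi>\<in>set \<phi>s. qfree \<phi> \<Longrightarrow> qfree (conj_list \<phi>s)"
  by (induction \<phi>s) auto

lemma qfree_disj_list: "\<forall>\<phi>\<in>set \<phi>s. qfree \<phi> \<Longrightarrow> qfree (disj_list \<phi>s)"
  by (induction \<phi>s) auto

lemma fv_conj_list: "fv (conj_list \<phi>s) = \<Union> (fv ` set \<phi>s)"
  by (induction \<phi>s) auto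

lemma fv_disj_list: "fv (disj_list \<phi>s) = \<Union> (fv ` set \<phi>s)"
  by (induction \<phi>s) auto

lemma fv_ex_block: "fv (ex_block k \<phi>) = fv \<phi> - {..<k}"
  by (induction k) (auto simp: lessThan_Suc)

lemma fv_all_block: "fv (all_block k \<phi>) = fv \<phi> - {..<k}"
  by (induction k) (auto simp: lessThan_Suc)

lemma existential_ex_block: "qfree \<phi> \<Longrightarrow> existential (ex_block k \<phi>)"
proof (induction k)
  case 0 then show ?case by (cases \<phi>) auto
next
  case (Suc k) then show ?case by simp
qed

lemma universal_all_block: "qfree \<phi> \<Longrightarrow> universal (all_block k \<phi>)"
proof (induction k)
  case 0 then show ?case by (cases \<phi>) auto
next
  case (Suc k) then show ?case by simp
qed

lemma sat_ex_block: "sat M e (ex_block k \<phi>) \<longleftrightarrow> (\<exists>f. (\<forall>i<k. f i \<in> carrier M) \<and> sat M (\<lambda>v. if v < k then f v else e v) \<phi>)"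
proof (induction k arbitrary: e)
  case 0 then show ?case by simp
next
  case (Suc k)
  have eqf: "(\<lambda>v. if v < k then f v else (e(k := a)) v) = (\<lambda>v. if v < Suc k then (f(k := a)) v else e v)" for f a
    by (auto simp: fun_eq_iff less_Suc_eq)
  show ?case
  proof
    assume "sat M e (ex_block (Suc k) \<phi>)"
    then obtain a f where a: "a \<in> carrier M" and f: "\<forall>i<k. f i \<in> carrier M"
      and s: "sat M (\<lambda>v. if v < k then f v else (e(k := a)) v) \<phi>" using Suc by auto
    show "\<exists>f. (\<forall>i<Suc k. f i \<in> carrier M) \<and> sat M (\<lambda>v. if v < Suc k then f v else e v) \<phi>"
      using a f s unfolding eqf by (intro exI[of _ "f(k := a)"]) (auto simp: less_Suc_eq)
  next
    assume "\<exists>f. (\<forall>i<Suc k. f i \<in> carrier M) \<and> sat M (\<lambda>v. if v < Suc k then f v else e v) \<phi>"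
    then obtain f where f: "\<forall>i<Suc k. f i \<in> carrier M" and s: "sat M (\<lambda>v. if v < Suc k then f v else e v) \<phi>" by blast
    have e2: "(\<lambda>v. if v < k then f v else (e(k := f k)) v) = (\<lambda>v. if v < Suc k then f v else e v)"
      by (auto simp: fun_eq_iff less_Suc_eq)
    then have "sat M (\<lambda>v. if v < k then f v else (e(k := f k)) v) \<phi>" using s by simp
    moreover have "f k \<in> carrier M" "\<forall>i<k. f i \<in> carrier M" using f by auto
    ultimately show "sat M e (ex_block (Suc k) \<phi>)" using Suc by auto
  qed
qed

lemma sat_all_block: "sat M e (all_block k \<phi>) \<longleftrightarrow> (\<forall>f. (\<forall>i<k. f i \<in> carrier M) \<longrightarrow> sat M (\<lambda>v. if v < k then f v else e v) \<phi>)"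
proof (induction k arbitrary: e)
  case 0 then show ?case by simp
next
  case (Suc k)
  have eqf: "(\<lambda>v. if v < k then f v else (e(k := a)) v) = (\<lambda>v. if v < Suc k then (f(k := a)) v else e v)" for f a
    by (auto simp: fun_eq_iff less_Suc_eq)
  show ?case
  proof
    assume A: "sat M e (all_block (Suc k) \<phi>)"
    show "\<forall>f. (\<forall>i<Suc k. f i \<in> carrier M) \<longrightarrow> sat M (\<lambda>v. if v < Suc k then f v else e v) \<phi>"
    proof (intro allI impI)
      fix f assume f: "\<forall>i<Suc k. f i \<in> carrier M"
      then have "sat M (\<lambda>v. if v < k then f v else (e(k := f k)) v) \<phi>" using A Suc by auto
      moreover have "(\<lambda>v. if v < k then f v else (e(k := f k)) v) = (\<lambda>v. if v < Suc k then f v else e v)"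
        by (auto simp: fun_eq_iff less_Suc_eq)
      ultimately show "sat M (\<lambda>v. if v < Suc k then f v else e v) \<phi>" by simp
    qed
  next
    assume A: "\<forall>f. (\<forall>i<Suc k. f i \<in> carrier M) \<longrightarrow> sat M (\<lambda>v. if v < Suc k then f v else e v) \<phi>"
    have "sat M (\<lambda>v. if v < k then f v else (e(k := a)) v) \<phi>" if "a \<in> carrier M" "\<forall>i<k. f i \<in> carrier M" for a f
    proof -
      have "\<forall>i<Suc k. (f(k := a)) i \<in> carrier M" using that by (auto simp: less_Suc_eq)
      then show ?thesis using A unfolding eqf by blast
    qed
    then show "sat M e (all_block (Suc k) \<phi>)" using Suc by auto
  qed
qed

definition at_most_fm :: "nat \<Rightarrow> fm" where
  "at_most_fm c = all_block (Suc c) (disj_list [FEq (TVar i) (TVar j). i \<leftarrow> [0..<Suc c], j \<leftarrow> [0..<Suc c], i < j])"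

lemma set_at_most_fm_disjuncts: "set [FEq (TVar i) (TVar j). i \<leftarrow> [0..<Suc c], j \<leftarrow> [0..<Suc c], i < j]
   = {FEq (TVar i) (TVar j) | i j. i < j \<and> j < Suc c}"
proof
  show "{FEq (TVar i) (TVar j) | i j. i < j \<and> j < Suc c} \<subseteq> set [FEq (TVar i) (TVar j). i \<leftarrow> [0..<Suc c], j \<leftarrow> [0..<Suc c], i < j]"
  proof clarify
    fix i j :: nat assume "i < j" "j < Suc c"
    then show "FEq (TVar i) (TVar j) \<in> set [FEq (TVar i) (TVar j). i \<leftarrow> [0..<Suc c], j \<leftarrow> [0..<Suc c], i < j]"
      by (auto intro!: bexI[of _ i])
  qed
qed auto

lemma at_most_fm_universal_sentence: "universal (at_most_fm c) \<and> sentence (at_most_fm c)"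
proof
  show "universal (at_most_fm c)" unfolding at_most_fm_def
    by (rule universal_all_block, rule qfree_disj_list) (simp only: set_at_most_fm_disjuncts, auto)
  have "fv (disj_list [FEq (TVar i) (TVar j). i \<leftarrow> [0..<Suc c], j \<leftarrow> [0..<Suc c], i < j]) \<subseteq> {..<Suc c}"
    unfolding fv_disj_list set_at_most_fm_disjuncts by auto
  then show "sentence (at_most_fm c)" unfolding at_most_fm_def sentence_def fv_all_block by blast
qed

lemma models_at_most_fm: "models M (at_most_fm c) \<longleftrightarrow> (\<forall>f. (\<forall>i<Suc c. f i \<in> carrier M) \<longrightarrow> (\<exists>i j. i < j \<and> j < Suc c \<and> f i = f j))"
proof -
  have h1: "sat M e (disj_list [FEq (TVar i) (TVar j). i \<leftarrow> [0..<Suc c], j \<leftarrow> [0..<Suc c], i < j])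
     \<longleftrightarrow> (\<exists>i j. i < j \<and> j < Suc c \<and> e i = e j)" for e
    unfolding sat_disj_list set_at_most_fm_disjuncts
  proof
    assume "\<exists>\<phi>\<in>{FEq (TVar i) (TVar j) |i j. i < j \<and> j < Suc c}. sat M e \<phi>"
    then show "\<exists>i j. i < j \<and> j < Suc c \<and> e i = e j" by auto blast
  next
    assume "\<exists>i j. i < j \<and> j < Suc c \<and> e i = e j"
    then obtain i j where "i < j" "j < Suc c" "e i = e j" by blast
    then show "\<exists>\<phi>\<in>{FEq (TVar i) (TVar j) |i j. i < j \<and> j < Suc c}. sat M e \<phi>"
      by (intro bexI[of _ "FEq (TVar i) (TVar j)"]) auto
  qed
  have h2: "(\<exists>i j. i < j \<and> j < Suc c \<and> (if i < Suc c then f i else \<one>\<^bsub>M\<^esub>) = (if j < Suc c then f j else \<one>\<^bsub>M\<^esub>))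
    \<longleftrightarrow> (\<exists>i j. i < j \<and> j < Suc c \<and> f i = f j)" for f
    by (metis (no_types, lifting) order.strict_trans)
  show ?thesis unfolding at_most_fm_def models_def sat_all_block h1 h2 ..
qed

lemma models_at_most_fm_iff_card: "models M (at_most_fm c) \<longleftrightarrow> finite (carrier M) \<and> card (carrier M) \<le> c"
proof
  assume A: "models M (at_most_fm c)"
  show "finite (carrier M) \<and> card (carrier M) \<le> c"
  proof (rule ccontr)
    assume nt: "\<not> (finite (carrier M) \<and> card (carrier M) \<le> c)"
    then obtain B where B: "finite B" "card B = Suc c" "B \<subseteq> carrier M"
    proof (cases "finite (carrier M)")
      case True
      then have "Suc c \<le> card (carrier M)" using nt by simp
      then obtain B where "B \<subseteq> carrier M" "card B = Suc c" using obtain_subset_with_card_n by metis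
      then show ?thesis using that True finite_subset by blast
    next
      case False
      then show ?thesis using that infinite_arbitrarily_large by blast
    qed
    obtain f where f: "bij_betw f {0..<Suc c} B" using ex_bij_betw_nat_finite[OF B(1)] B(2) by metis
    have "\<forall>i<Suc c. f i \<in> carrier M" using f B(3) by (auto simp: bij_betw_def)
    then obtain i j where "i < j" "j < Suc c" "f i = f j" using A models_at_most_fm by blast
    then show False using f unfolding bij_betw_def inj_on_def
      by (metis atLeastLessThan_iff less_irrefl zero_le less_trans)
  qed
next
  assume A: "finite (carrier M) \<and> card (carrier M) \<le> c"
  show "models M (at_most_fm c)" unfolding models_at_most_fm
  proof (intro allI impI)
    fix f assume f: "\<forall>i<Suc c. f i \<in> carrier M"
    show "\<exists>i j. i < j \<and> j < Suc c \<and> f i = f j"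
    proof (rule ccontr)
      assume "\<not> ?thesis"
      then have "inj_on f {0..<Suc c}" unfolding inj_on_def by (metis atLeastLessThan_iff linorder_neqE_nat)
      then have "card (f ` {0..<Suc c}) = Suc c" by (simp add: card_image)
      moreover have "f ` {0..<Suc c} \<subseteq> carrier M" using f by auto
      ultimately have "Suc c \<le> card (carrier M)" using A card_mono by metis
      then show False using A by simp
    qed
  qed
qed

lemma struct_iso_sym:
  assumes "struct_iso A B" "L_structure A"
  shows "struct_iso B A"
proof -
  obtain h where h: "bij_betw h (carrier A) (carrier B)" "h \<one>\<^bsub>A\<^esub> = \<one>\<^bsub>B\<^esub>"
    "\<forall>x\<in>carrier A. \<forall>y\<in>carrier A. h (x \<otimes>\<^bsub>A\<^esub> y) = h x \<otimes>\<^bsub>B\<^esub> h y"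
    using assms(1) unfolding struct_iso_def by blast
  let ?g = "inv_into (carrier A) h"
  have inj: "inj_on h (carrier A)" using h(1) by (simp add: bij_betw_def)
  have "bij_betw ?g (carrier B) (carrier A)" by (rule bij_betw_inv_into[OF h(1)])
  moreover have "?g \<one>\<^bsub>B\<^esub> = \<one>\<^bsub>A\<^esub>"
    using h(2)[symmetric] inv_into_f_f[OF inj] assms(2) by (simp add: L_structure_def)
  moreover have "?g (u \<otimes>\<^bsub>B\<^esub> v) = ?g u \<otimes>\<^bsub>A\<^esub> ?g v" if u: "u \<in> carrier B" and v: "v \<in> carrier B" for u v
  proof -
    have surj: "h ` carrier A = carrier B" using h(1) by (simp add: bij_betw_def)
    obtain x where x: "x \<in> carrier A" "u = h x" using u surj by blast
    obtain y where y: "y \<in> carrier A" "v = h y" using v surj by blast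
    have "u \<otimes>\<^bsub>B\<^esub> v = h (x \<otimes>\<^bsub>A\<^esub> y)" using h(3) x y by simp
    then have "?g (u \<otimes>\<^bsub>B\<^esub> v) = x \<otimes>\<^bsub>A\<^esub> y"
      using inv_into_f_f[OF inj] assms(2) x y by (simp add: L_structure_def)
    then show ?thesis using inv_into_f_f[OF inj] x y by simp
  qed
  ultimately show ?thesis unfolding struct_iso_def by blast
qed

lemma iso_imp_struct_iso: "group A \<Longrightarrow> group B \<Longrightarrow> A \<cong> B \<Longrightarrow> struct_iso A B"
proof -
  assume gA: "group A" and gB: "group B" and "A \<cong> B"
  then obtain h where h: "h \<in> iso A B" unfolding is_iso_def by blast
  then have "h \<in> hom A B" "bij_betw h (carrier A) (carrier B)" by (auto simp: iso_def)
  moreover have "h \<one>\<^bsub>A\<^esub> = \<one>\<^bsub>B\<^esub>" using hom_one[OF _ gA gB] h by (auto simp: iso_def)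
  ultimately show ?thesis unfolding struct_iso_def hom_def by blast
qed

lemma struct_iso_card: "struct_iso A B \<Longrightarrow> card (carrier A) = card (carrier B) \<and> (finite (carrier A) \<longleftrightarrow> finite (carrier B))"
  unfolding struct_iso_def by (meson bij_betw_finite bij_betw_same_card)

definition diagram_fm :: "nat \<Rightarrow> (nat \<Rightarrow> nat \<Rightarrow> nat) \<Rightarrow> nat \<Rightarrow> fm" where
  "diagram_fm c t u = ex_block c (conj_list ([FNot (FEq (TVar i) (TVar j)). i \<leftarrow> [0..<c], j \<leftarrow> [0..<c], i \<noteq> j] @
      [FEq (TMul (TVar i) (TVar j)) (TVar (t i j)). i \<leftarrow> [0..<c], j \<leftarrow> [0..<c]] @ [FEq (TVar u) TOne]))"

lemma diagram_fm_existential_sentence: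
  assumes "\<forall>i<c. \<forall>j<c. t i j < c" "u < c"
  shows "existential (diagram_fm c t u) \<and> sentence (diagram_fm c t u)"
proof
  show "existential (diagram_fm c t u)" unfolding diagram_fm_def
    by (rule existential_ex_block, rule qfree_conj_list) auto
  have "fv (conj_list ([FNot (FEq (TVar i) (TVar j)). i \<leftarrow> [0..<c], j \<leftarrow> [0..<c], i \<noteq> j] @
      [FEq (TMul (TVar i) (TVar j)) (TVar (t i j)). i \<leftarrow> [0..<c], j \<leftarrow> [0..<c]] @ [FEq (TVar u) TOne])) \<subseteq> {..<c}"
    unfolding fv_conj_list using assms by auto
  then show "sentence (diagram_fm c t u)" unfolding diagram_fm_def sentence_def fv_ex_block by blast
qed

lemma models_diagram_fm:
  assumes "\<forall>i<c. \<forall>j<c. t i j < c" "u < c"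
  shows "models M (diagram_fm c t u) \<longleftrightarrow> (\<exists>f. (\<forall>i<c. f i \<in> carrier M) \<and> inj_on f {0..<c} \<and>
     (\<forall>i<c. \<forall>j<c. f i \<otimes>\<^bsub>M\<^esub> f j = f (t i j)) \<and> f u = \<one>\<^bsub>M\<^esub>)"
proof -
  have "sat M (\<lambda>v. if v < c then f v else \<one>\<^bsub>M\<^esub>) (conj_list ([FNot (FEq (TVar i) (TVar j)). i \<leftarrow> [0..<c], j \<leftarrow> [0..<c], i \<noteq> j] @
      [FEq (TMul (TVar i) (TVar j)) (TVar (t i j)). i \<leftarrow> [0..<c], j \<leftarrow> [0..<c]] @ [FEq (TVar u) TOne]))
    \<longleftrightarrow> inj_on f {0..<c} \<and> (\<forall>i<c. \<forall>j<c. f i \<otimes>\<^bsub>M\<^esub> f j = f (t i j)) \<and> f u = \<one>\<^bsub>M\<^esub>" for f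
  proof -
    let ?e = "\<lambda>v. if v < c then f v else \<one>\<^bsub>M\<^esub>"
    have s1: "set [FNot (FEq (TVar i) (TVar j)). i \<leftarrow> [0..<c], j \<leftarrow> [0..<c], i \<noteq> j]
       = {FNot (FEq (TVar i) (TVar j)) | i j. i < c \<and> j < c \<and> i \<noteq> j}" by auto
    have s2: "set [FEq (TMul (TVar i) (TVar j)) (TVar (t i j)). i \<leftarrow> [0..<c], j \<leftarrow> [0..<c]]
       = {FEq (TMul (TVar i) (TVar j)) (TVar (t i j)) | i j. i < c \<and> j < c}" by auto
    have a1: "(\<forall>\<phi>\<in>{FNot (FEq (TVar i) (TVar j)) | i j. i < c \<and> j < c \<and> i \<noteq> j}. sat M ?e \<phi>)
       \<longleftrightarrow> inj_on f {0..<c}"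
    proof
      assume A: "\<forall>\<phi>\<in>{FNot (FEq (TVar i) (TVar j)) | i j. i < c \<and> j < c \<and> i \<noteq> j}. sat M ?e \<phi>"
      show "inj_on f {0..<c}"
      proof (rule inj_onI, rule ccontr)
        fix x y assume "x \<in> {0..<c}" "y \<in> {0..<c}" "f x = f y" "x \<noteq> y"
        then have "FNot (FEq (TVar x) (TVar y)) \<in> {FNot (FEq (TVar i) (TVar j)) | i j. i < c \<and> j < c \<and> i \<noteq> j}"
          by auto
        then have "sat M ?e (FNot (FEq (TVar x) (TVar y)))" using A by blast
        then show False using \<open>x \<in> {0..<c}\<close> \<open>y \<in> {0..<c}\<close> \<open>f x = f y\<close> by simp
      qed
    qed (auto simp: inj_on_def)
    have a2: "(\<forall>\<phi>\<in>{FEq (TMul (TVar i) (TVar j)) (TVar (t i j)) | i j. i < c \<and> j < c}. sat M ?e \<phi>)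
       \<longleftrightarrow> (\<forall>i<c. \<forall>j<c. f i \<otimes>\<^bsub>M\<^esub> f j = f (t i j))"
    proof
      assume A: "\<forall>\<phi>\<in>{FEq (TMul (TVar i) (TVar j)) (TVar (t i j)) | i j. i < c \<and> j < c}. sat M ?e \<phi>"
      show "\<forall>i<c. \<forall>j<c. f i \<otimes>\<^bsub>M\<^esub> f j = f (t i j)"
      proof (intro allI impI)
        fix i j assume ij: "i < c" "j < c"
        then have "sat M ?e (FEq (TMul (TVar i) (TVar j)) (TVar (t i j)))" using A by blast
        then show "f i \<otimes>\<^bsub>M\<^esub> f j = f (t i j)" using ij assms(1) by simp
      qed
    qed (use assms(1) in auto)
    have a3: "sat M ?e (FEq (TVar u) TOne) \<longleftrightarrow> f u = \<one>\<^bsub>M\<^esub>" using assms(2) by simp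
    show ?thesis unfolding sat_conj_list set_append s1 s2 ball_Un a1 a2 using a3 by simp
  qed
  then show ?thesis unfolding diagram_fm_def models_def sat_ex_block by auto
qed

lemma models_FAnd: "models M (FAnd a b) \<longleftrightarrow> models M a \<and> models M b"
  by (simp add: models_def)

definition enum_table :: "('a, 'b) monoid_scheme \<Rightarrow> nat \<Rightarrow> (nat \<Rightarrow> 'a) \<Rightarrow> (nat \<Rightarrow> nat \<Rightarrow> nat) \<Rightarrow> nat \<Rightarrow> bool"
  where "enum_table C c el t u \<longleftrightarrow> bij_betw el {0..<c} (carrier C) \<and>
     (\<forall>i<c. \<forall>j<c. t i j < c \<and> el (t i j) = el i \<otimes>\<^bsub>C\<^esub> el j) \<and> u < c \<and> el u = \<one>\<^bsub>C\<^esub>"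

lemma ex_enum_table:
  assumes "L_structure C" "finite (carrier C)"
  obtains el t u where "enum_table C (card (carrier C)) el t u"
proof -
  let ?c = "card (carrier C)"
  obtain el where el: "bij_betw el {0..<?c} (carrier C)"
    using ex_bij_betw_nat_finite[OF assms(2)] by blast
  let ?ix = "inv_into {0..<?c} el"
  have "?ix z < ?c \<and> el (?ix z) = z" if "z \<in> carrier C" for z
    using that el bij_betw_inv_into[OF el] by (auto simp: bij_betw_def f_inv_into_f)
  moreover have "el i \<in> carrier C" if "i < ?c" for i using that el by (auto simp: bij_betw_def)
  ultimately have "enum_table C ?c el (\<lambda>i j. ?ix (el i \<otimes>\<^bsub>C\<^esub> el j)) (?ix \<one>\<^bsub>C\<^esub>)"
    using el assms(1) by (simp add: enum_table_def L_structure_def)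
  then show ?thesis using that by blast
qed

lemma models_diagram_imp_struct_iso:
  assumes tab: "enum_table C c el t u" and LC: "L_structure C"
    and dg: "models M (diagram_fm c t u)" and card: "models M (at_most_fm c)"
  shows "struct_iso M C"
proof -
  have tu: "\<forall>i<c. \<forall>j<c. t i j < c" "u < c" and el: "bij_betw el {0..<c} (carrier C)"
    using tab by (auto simp: enum_table_def)
  obtain f where f: "\<forall>i<c. f i \<in> carrier M" "inj_on f {0..<c}"
    "\<forall>i<c. \<forall>j<c. f i \<otimes>\<^bsub>M\<^esub> f j = f (t i j)" "f u = \<one>\<^bsub>M\<^esub>"
    using dg models_diagram_fm[OF tu] by blast
  have fM: "finite (carrier M)" "card (carrier M) \<le> c" using card models_at_most_fm_iff_card by auto
  have sub: "f ` {0..<c} \<subseteq> carrier M" using f(1) by auto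
  have "card (f ` {0..<c}) = c" using f(2) by (simp add: card_image)
  then have "f ` {0..<c} = carrier M" using card_subset_eq[OF fM(1) sub] fM(2) card_mono[OF fM(1) sub] by simp
  then have fb: "bij_betw f {0..<c} (carrier M)" using f(2) by (simp add: bij_betw_def)
  let ?ix = "inv_into {0..<c} el"
  have ix: "?ix z < c" "el (?ix z) = z" if "z \<in> carrier C" for z
    using that el bij_betw_inv_into[OF el] by (auto simp: bij_betw_def f_inv_into_f)
  have ixel: "?ix (el i) = i" if "i < c" for i
    using that el by (simp add: bij_betw_def inv_into_f_f)
  have mult: "?ix (x \<otimes>\<^bsub>C\<^esub> y) = t (?ix x) (?ix y)" if "x \<in> carrier C" "y \<in> carrier C" for x y
  proof -
    have "x \<otimes>\<^bsub>C\<^esub> y = el (t (?ix x) (?ix y))" "t (?ix x) (?ix y) < c"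
      using tab ix that by (auto simp: enum_table_def)
    then show ?thesis using ixel by simp
  qed
  have "struct_iso C M" unfolding struct_iso_def
  proof (intro exI conjI ballI)
    show "bij_betw (f \<circ> ?ix) (carrier C) (carrier M)"
      by (rule bij_betw_trans[OF bij_betw_inv_into[OF el] fb])
    have "u < c" "el u = \<one>\<^bsub>C\<^esub>" using tab by (auto simp: enum_table_def)
    then show "(f \<circ> ?ix) \<one>\<^bsub>C\<^esub> = \<one>\<^bsub>M\<^esub>" using f(4) ixel[of u] by simp
    fix x y assume "x \<in> carrier C" "y \<in> carrier C"
    then show "(f \<circ> ?ix) (x \<otimes>\<^bsub>C\<^esub> y) = (f \<circ> ?ix) x \<otimes>\<^bsub>M\<^esub> (f \<circ> ?ix) y"
      using mult f(3) ix by simp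
  qed
  then show ?thesis using struct_iso_sym LC by blast
qed

lemma struct_iso_imp_models_diagram:
  assumes tab: "enum_table C c el t u" and LM: "L_structure M" and iso: "struct_iso M C"
  shows "models M (diagram_fm c t u)"
proof -
  have tu: "\<forall>i<c. \<forall>j<c. t i j < c" "u < c" and el: "bij_betw el {0..<c} (carrier C)"
    using tab by (auto simp: enum_table_def)
  obtain k where k: "bij_betw k (carrier C) (carrier M)" "k \<one>\<^bsub>C\<^esub> = \<one>\<^bsub>M\<^esub>"
    "\<forall>x\<in>carrier C. \<forall>y\<in>carrier C. k (x \<otimes>\<^bsub>C\<^esub> y) = k x \<otimes>\<^bsub>M\<^esub> k y"
    using struct_iso_sym[OF iso LM] unfolding struct_iso_def by blast
  have fb: "bij_betw (k \<circ> el) {0..<c} (carrier M)" by (rule bij_betw_trans[OF el k(1)])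
  have elc: "el i \<in> carrier C" if "i < c" for i using that el by (auto simp: bij_betw_def)
  show ?thesis unfolding models_diagram_fm[OF tu]
  proof (intro exI conjI)
    show "\<forall>i<c. (k \<circ> el) i \<in> carrier M" "inj_on (k \<circ> el) {0..<c}"
      using fb by (auto simp: bij_betw_def)
    show "\<forall>i<c. \<forall>j<c. (k \<circ> el) i \<otimes>\<^bsub>M\<^esub> (k \<circ> el) j = (k \<circ> el) (t i j)"
      using k(3) elc tab by (simp add: enum_table_def)
    show "(k \<circ> el) u = \<one>\<^bsub>M\<^esub>" using k(2) tab by (simp add: enum_table_def)
  qed
qed

lemma dce_scott_sentence_finite:
  assumes LC: "L_structure C" and fin: "finite (carrier C)"
  shows "\<exists>\<phi>. dce_sentence \<phi> \<and> scott_sentence_within (\<lambda>M. True) C \<phi>"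
proof -
  obtain el t u where tab: "enum_table C (card (carrier C)) el t u"
    using ex_enum_table[OF LC fin] .
  define \<phi> where "\<phi> = FAnd (diagram_fm (card (carrier C)) t u) (at_most_fm (card (carrier C)))"
  have "dce_sentence \<phi>" "sentence \<phi>"
    using diagram_fm_existential_sentence at_most_fm_universal_sentence tab
    unfolding \<phi>_def dce_sentence_def enum_table_def sentence_def by auto
  moreover have "models M \<phi> \<longleftrightarrow> struct_iso M C" if LM: "L_structure M" for M :: "nat monoid"
  proof
    assume "models M \<phi>"
    then show "struct_iso M C"
      using models_diagram_imp_struct_iso[OF tab LC] unfolding \<phi>_def models_FAnd by blast
  next
    assume iso: "struct_iso M C"
    then have "models M (at_most_fm (card (carrier C)))"
      using struct_iso_card[OF iso] fin unfolding models_at_most_fm_iff_card by simp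
    then show "models M \<phi>"
      using struct_iso_imp_models_diagram[OF tab LM iso] unfolding \<phi>_def models_FAnd by blast
  qed
  ultimately show ?thesis unfolding scott_sentence_within_def by blast
qed

lemma universal_scott_sentence_cyclic:
  assumes p: "Factorial_Ring.prime p" and ap: "abelian_p_group p C" and fin: "finite (carrier C)"
    and nt: "carrier C \<noteq> {\<one>\<^bsub>C\<^esub>}" and hl: "has_length p C N"
    and cyc: "C \<cong> integer_mod_group (p ^ N)"
  shows "\<exists>\<phi>. universal \<phi> \<and> scott_sentence_within (\<lambda>M. abelian_p_group p M \<and> has_length p M N) C \<phi>"
proof -
  have gC: "group C" using ap by (simp add: abelian_p_group_def comm_group_def)
  have N: "0 < N" using has_length_exponentD[OF ap fin hl nt] by blast
  obtain h where "h \<in> iso C (integer_mod_group (p ^ N))" using cyc unfolding is_iso_def by blast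
  then have "bij_betw h (carrier C) (carrier (integer_mod_group (p ^ N)))" by (simp add: iso_def)
  then have "card (carrier C) = card (carrier (integer_mod_group (p ^ N)))" by (rule bij_betw_same_card)
  then have cardC: "card (carrier C) = p ^ N"
    using carrier_integer_mod_group_prime_power[OF p] by simp
  have "models M (at_most_fm (p ^ N)) \<longleftrightarrow> struct_iso M C"
    if K: "abelian_p_group p M" "has_length p M N" for M :: "nat monoid"
  proof
    have gM: "group M" using K by (simp add: abelian_p_group_def comm_group_def)
    assume "models M (at_most_fm (p ^ N))"
    then have "integer_mod_group (p ^ N) \<cong> M"
      using integer_mod_group_iso_if_card_le[OF p K N] models_at_most_fm_iff_card by blast
    then have "M \<cong> C" using cyc iso_trans group.iso_sym[OF gC] by blast
    then show "struct_iso M C" using iso_imp_struct_iso[OF gM gC] by blast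
  next
    assume "struct_iso M C"
    then show "models M (at_most_fm (p ^ N))"
      unfolding models_at_most_fm_iff_card using struct_iso_card[of M C] fin cardC by simp
  qed
  then show ?thesis unfolding scott_sentence_within_def using at_most_fm_universal_sentence by blast
qed

section \<open>Sequences of Abelian \<open>p\<close>-groups of fixed length\<close>

lemma abelian_p_group_has_length_iso:
  assumes "abelian_p_group p A" "has_length p A N" "A \<cong> B" "group B"
  shows "abelian_p_group p B \<and> has_length p B N"
proof -
  obtain h where h: "h \<in> iso A B" using assms(3) unfolding is_iso_def by blast
  have "group A" using assms(1) by (simp add: abelian_p_group_def comm_group_def)
  then show ?thesis using abelian_p_group_iso[OF assms(1) h assms(4)] has_length_iso[OF h _ assms(4,2)] by blast
qed

lemma unif_computable_abelian_p_group_seq: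
  assumes cM: "comm_group M" and fin: "finite (carrier M)" and N: "0 < N"
    and exp: "\<forall>x\<in>carrier M. x [^]\<^bsub>M\<^esub> (p ^ N) = \<one>\<^bsub>M\<^esub>"
    and SA: "subgroup DA M" and SK: "subgroup DK M" and AK: "DA \<subseteq> DK"
    and g: "g \<in> DA" "g [^]\<^bsub>M\<^esub> (p ^ (N - 1)) \<noteq> \<one>\<^bsub>M\<^esub>"
    and cu: "stage_enum Xo Qu U" and cv: "stage_enum Xo Qv V" and VU: "V \<subseteq> U"
  shows "\<exists>Cs :: nat \<Rightarrow> nat monoid. unif_computable_seq Xo Cs \<and>
    (\<forall>n. abelian_p_group p (Cs n) \<and> has_length p (Cs n) N) \<and>
    (\<forall>n. M\<lparr>carrier := (if n \<in> V then carrier M else if n \<in> U then DK else DA)\<rparr> \<cong> Cs n)"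
proof -
  have gM: "group M" using cM by (simp add: comm_group_def)
  obtain Cs :: "nat \<Rightarrow> nat monoid" where Cs: "unif_computable_seq Xo Cs" "\<forall>n. group (Cs n)"
    "\<forall>n. M\<lparr>carrier := (if n \<in> V then carrier M else if n \<in> U then DK else DA)\<rparr> \<cong> Cs n"
    using unif_computable_staged_subgroups[OF gM fin SA SK AK cu cv VU] by blast
  have "abelian_p_group p (Cs n) \<and> has_length p (Cs n) N" for n
  proof -
    let ?D = "if n \<in> V then carrier M else if n \<in> U then DK else DA"
    have "subgroup ?D M" "g \<in> ?D"
      using SA SK AK g(1) group.subgroup_self[OF gM] subgroup.subset[OF SK] by auto
    then show ?thesis
      using subgroup_abelian_p_group_has_length[OF cM _ N exp _ g(2)] Cs(2,3)
        abelian_p_group_has_length_iso by blast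
  qed
  then show ?thesis using Cs(1,3) by blast
qed

lemma comm_group_DirProd: "comm_group C \<Longrightarrow> comm_group D \<Longrightarrow> comm_group (C \<times>\<times> D)"
  by (rule group.group_comm_groupI[OF DirProd_group])
     (auto simp: comm_group_def comm_monoid.m_comm)

lemma DirProd_self_not_iso:
  assumes fin: "finite (carrier C)" and nt: "carrier C \<noteq> {\<one>\<^bsub>C\<^esub>}" and one: "\<one>\<^bsub>C\<^esub> \<in> carrier C"
  shows "\<not> C \<times>\<times> C \<cong> C"
proof
  assume "C \<times>\<times> C \<cong> C"
  then obtain h where "bij_betw h (carrier C \<times> carrier C) (carrier C)"
    by (auto simp: is_iso_def iso_def)
  then have "card (carrier C \<times> carrier C) = card (carrier C)" by (rule bij_betw_same_card)
  then have "card (carrier C) * card (carrier C) = card (carrier C)"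
    by (simp add: card_cartesian_product)
  moreover obtain x where "x \<in> carrier C" "x \<noteq> \<one>\<^bsub>C\<^esub>" using nt one by blast
  then have "2 \<le> card (carrier C)"
    using one fin card_mono[OF fin, of "{x, \<one>\<^bsub>C\<^esub>}"] by auto
  ultimately show False by simp
qed

lemma DirProd_self_exponent:
  assumes ap: "abelian_p_group p C" and fin: "finite (carrier C)" and nt: "carrier C \<noteq> {\<one>\<^bsub>C\<^esub>}"
    and hl: "has_length p C N" and g: "g \<in> carrier C" "g [^]\<^bsub>C\<^esub> (p ^ (N - 1)) \<noteq> \<one>\<^bsub>C\<^esub>"
  shows "\<forall>x\<in>carrier (C \<times>\<times> C). x [^]\<^bsub>C \<times>\<times> C\<^esub> (p ^ N) = \<one>\<^bsub>C \<times>\<times> C\<^esub>"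
    and "(g, \<one>\<^bsub>C\<^esub>) [^]\<^bsub>C \<times>\<times> C\<^esub> (p ^ (N - 1)) \<noteq> \<one>\<^bsub>C \<times>\<times> C\<^esub>"
proof -
  have mC: "monoid C" using ap by (simp add: abelian_p_group_def comm_group_def group.is_monoid)
  have "\<forall>x\<in>carrier C. x [^]\<^bsub>C\<^esub> (p ^ N) = \<one>\<^bsub>C\<^esub>"
    using has_length_exponentD[OF ap fin hl nt] by blast
  then show "\<forall>x\<in>carrier (C \<times>\<times> C). x [^]\<^bsub>C \<times>\<times> C\<^esub> (p ^ N) = \<one>\<^bsub>C \<times>\<times> C\<^esub>"
    using DirProd_nat_pow[OF mC mC] by simp
  show "(g, \<one>\<^bsub>C\<^esub>) [^]\<^bsub>C \<times>\<times> C\<^esub> (p ^ (N - 1)) \<noteq> \<one>\<^bsub>C \<times>\<times> C\<^esub>"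
    using DirProd_nat_pow[OF mC mC g(1) monoid.one_closed[OF mC]] g(2) by simp
qed

lemma staged_square_seq:
  assumes ap: "abelian_p_group p C" and fin: "finite (carrier C)" and nt: "carrier C \<noteq> {\<one>\<^bsub>C\<^esub>}"
    and hl: "has_length p C N" and H: "subgroup H C" and g: "g \<in> H" "g [^]\<^bsub>C\<^esub> (p ^ (N - 1)) \<noteq> \<one>\<^bsub>C\<^esub>"
    and cu: "stage_enum Xo Qu U" and cv: "stage_enum Xo Qv V" and VU: "V \<subseteq> U"
  shows "\<exists>Cs :: nat \<Rightarrow> nat monoid. unif_computable_seq Xo Cs \<and>
    (\<forall>n. abelian_p_group p (Cs n) \<and> has_length p (Cs n) N) \<and>
    (\<forall>n\<in>V. \<not> Cs n \<cong> C) \<and> (\<forall>n\<in>U - V. Cs n \<cong> C) \<and> (\<forall>n. n \<notin> U \<longrightarrow> C\<lparr>carrier := H\<rparr> \<cong> Cs n)"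
proof -
  have cC: "comm_group C" and gC: "group C" using ap by (auto simp: abelian_p_group_def comm_group_def)
  have N: "0 < N" using has_length_exponentD[OF ap fin hl nt] by blast
  let ?M = "C \<times>\<times> C" and ?K = "carrier C \<times> {\<one>\<^bsub>C\<^esub>}" and ?A = "H \<times> {\<one>\<^bsub>C\<^esub>}"
  have K: "subgroup ?K ?M" "C \<cong> ?M\<lparr>carrier := ?K\<rparr>"
    using first_factor_subgroup[OF gC group.subgroup_self[OF gC]] by simp_all
  have A: "subgroup ?A ?M" "C\<lparr>carrier := H\<rparr> \<cong> ?M\<lparr>carrier := ?A\<rparr>"
    using first_factor_subgroup[OF gC H] by simp_all
  have gC': "g \<in> carrier C" and AK: "?A \<subseteq> ?K" using g(1) subgroup.subset[OF H] by auto
  have "finite (carrier ?M)" "(g, \<one>\<^bsub>C\<^esub>) \<in> ?A" using fin g(1) by simp_all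
  then obtain Cs :: "nat \<Rightarrow> nat monoid" where Cs: "unif_computable_seq Xo Cs"
    "\<forall>n. abelian_p_group p (Cs n) \<and> has_length p (Cs n) N"
    "\<forall>n. ?M\<lparr>carrier := (if n \<in> V then carrier ?M else if n \<in> U then ?K else ?A)\<rparr> \<cong> Cs n"
    using unif_computable_abelian_p_group_seq[OF comm_group_DirProd[OF cC cC] _ N
        DirProd_self_exponent(1)[OF ap fin nt hl gC' g(2)] A(1) K(1) AK _
        DirProd_self_exponent(2)[OF ap fin nt hl gC' g(2)] cu cv VU]
    by blast
  have "\<not> Cs n \<cong> C" if "n \<in> V" for n
  proof
    assume "Cs n \<cong> C"
    moreover have "?M \<cong> Cs n" using Cs(3)[rule_format, of n] that by (simp del: carrier_DirProd)
    ultimately show False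
      using iso_trans DirProd_self_not_iso[OF fin nt monoid.one_closed[OF group.is_monoid[OF gC]]] by blast
  qed
  moreover have "Cs n \<cong> C" if "n \<in> U - V" for n
  proof -
    have "?M\<lparr>carrier := ?K\<rparr> \<cong> Cs n" using Cs(3)[rule_format, of n] that by simp
    then show ?thesis using K(2) iso_trans group.iso_sym[OF gC] by blast
  qed
  moreover have "C\<lparr>carrier := H\<rparr> \<cong> Cs n" if "n \<notin> U" for n
  proof -
    have "n \<notin> V" using that VU by blast
    then have "?M\<lparr>carrier := ?A\<rparr> \<cong> Cs n" using Cs(3)[rule_format, of n] that by simp
    then show ?thesis using A(2) iso_trans by blast
  qed
  ultimately show ?thesis using Cs(1,2) by blast
qed

lemma pi01_abelian_p_group_seq:
  assumes ap: "abelian_p_group p C" and fin: "finite (carrier C)" and nt: "carrier C \<noteq> {\<one>\<^bsub>C\<^esub>}"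
    and hl: "has_length p C N" and S: "pi01_in Xo S"
  shows "\<exists>Cs :: nat \<Rightarrow> nat monoid. unif_computable_seq Xo Cs \<and>
    (\<forall>n. abelian_p_group p (Cs n) \<and> has_length p (Cs n) N) \<and> (\<forall>n. Cs n \<cong> C \<longleftrightarrow> n \<in> S)"
proof -
  have gC: "group C" using ap by (simp add: abelian_p_group_def comm_group_def)
  obtain g where g: "g \<in> carrier C" "g [^]\<^bsub>C\<^esub> (p ^ (N - 1)) \<noteq> \<one>\<^bsub>C\<^esub>"
    using has_length_exponentD[OF ap fin hl nt] by blast
  obtain Q where Q: "stage_enum Xo Q (- S)" using ce_in_stage_enum S unfolding pi01_in_def by blast
  obtain Cs :: "nat \<Rightarrow> nat monoid" where Cs: "unif_computable_seq Xo Cs"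
    "\<forall>n. abelian_p_group p (Cs n) \<and> has_length p (Cs n) N" "\<forall>n\<in>- S. \<not> Cs n \<cong> C"
    "\<forall>n. n \<notin> - S \<longrightarrow> C\<lparr>carrier := carrier C\<rparr> \<cong> Cs n"
    using staged_square_seq[OF ap fin nt hl group.subgroup_self[OF gC] g Q Q subset_refl] by blast
  have "Cs n \<cong> C \<longleftrightarrow> n \<in> S" for n
    using Cs(3,4) group.iso_sym[OF gC] by (cases "n \<in> S") auto
  then show ?thesis using Cs(1,2) by blast
qed

lemma dce_abelian_p_group_seq:
  assumes p: "Factorial_Ring.prime p" and ap: "abelian_p_group p C" and fin: "finite (carrier C)"
    and nt: "carrier C \<noteq> {\<one>\<^bsub>C\<^esub>}" and hl: "has_length p C N"
    and ncyc: "\<not> C \<cong> integer_mod_group (p ^ N)" and S: "dce_in Xo S"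
  shows "\<exists>Cs :: nat \<Rightarrow> nat monoid. unif_computable_seq Xo Cs \<and>
    (\<forall>n. abelian_p_group p (Cs n) \<and> has_length p (Cs n) N) \<and> (\<forall>n. Cs n \<cong> C \<longleftrightarrow> n \<in> S)"
proof -
  have gC: "group C" using ap by (simp add: abelian_p_group_def comm_group_def)
  obtain g where N: "0 < N" and g: "g \<in> carrier C" "g [^]\<^bsub>C\<^esub> (p ^ (N - 1)) \<noteq> \<one>\<^bsub>C\<^esub>"
    "g [^]\<^bsub>C\<^esub> (p ^ N) = \<one>\<^bsub>C\<^esub>"
    using has_length_exponentD[OF ap fin hl nt] by blast
  define H where "H = cyclic_pow C g ` carrier (integer_mod_group (p ^ N))"
  have H: "subgroup H C" and cyc: "integer_mod_group (p ^ N) \<cong> C\<lparr>carrier := H\<rparr>"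
    using cyclic_pow_iso[OF gC p N g(1,3,2)] unfolding H_def by (auto intro: is_isoI)
  have "1 < p ^ N" using one_less_power[OF prime_gt_1_nat[OF p] N] .
  then have "int 1 < int (p ^ N)" by (simp only: of_nat_less_iff)
  then have "1 \<in> carrier (integer_mod_group (p ^ N))"
    using carrier_integer_mod_group_prime_power[OF p] by simp
  moreover have "cyclic_pow C g 1 = g"
    unfolding cyclic_pow_def using monoid.nat_pow_eone[OF group.is_monoid[OF gC] g(1)] by simp
  ultimately have gH: "g \<in> H" unfolding H_def by (metis image_eqI)
  obtain S1 S2 where S12: "ce_in Xo S1" "ce_in Xo S2" "S = S1 - S2" using S unfolding dce_in_def by blast
  obtain Q1 Q2 where Q1: "stage_enum Xo Q1 S1" and Q2: "stage_enum Xo Q2 S2"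
    using ce_in_stage_enum S12(1,2) by metis
  obtain Cs :: "nat \<Rightarrow> nat monoid" where Cs: "unif_computable_seq Xo Cs"
    "\<forall>n. abelian_p_group p (Cs n) \<and> has_length p (Cs n) N" "\<forall>n\<in>S2. \<not> Cs n \<cong> C"
    "\<forall>n\<in>(S1 \<union> S2) - S2. Cs n \<cong> C" "\<forall>n. n \<notin> S1 \<union> S2 \<longrightarrow> C\<lparr>carrier := H\<rparr> \<cong> Cs n"
    using staged_square_seq[OF ap fin nt hl H gH g(2) stage_enum_Un[OF Q1 Q2] Q2] by blast
  have "\<not> Cs n \<cong> C" if "n \<notin> S1 \<union> S2" for n
    using Cs(5) that cyc ncyc iso_trans group.iso_sym[OF group_integer_mod_group] by metis
  then have "Cs n \<cong> C \<longleftrightarrow> n \<in> S" for n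
    using Cs(3,4) S12(3) by blast
  then show ?thesis using Cs(1,2) by blast
qed

theorem lemma5p8:
  fixes p N :: nat and C :: "'a monoid"
  assumes "Factorial_Ring.prime p"
    and "abelian_p_group p C" and "finite (carrier C)" and "carrier C \<noteq> {\<one>\<^bsub>C\<^esub>}"
    and "has_length p C N"
  shows "(C \<cong> integer_mod_group (p ^ N) \<longrightarrow>
            (\<exists>\<phi>. universal \<phi> \<and>
               scott_sentence_within (\<lambda>M. abelian_p_group p M \<and> has_length p M N) C \<phi>) \<and>
            (\<forall>Xo S. pi01_in Xo S \<longrightarrow>
               (\<exists>Cs :: nat \<Rightarrow> nat monoid. unif_computable_seq Xo Cs \<and>
                  (\<forall>n. abelian_p_group p (Cs n) \<and> has_length p (Cs n) N) \<and>
                  (\<forall>n. Cs n \<cong> C \<longleftrightarrow> n \<in> S))))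
       \<and> (\<not> C \<cong> integer_mod_group (p ^ N) \<longrightarrow>
            (\<exists>\<phi>. dce_sentence \<phi> \<and> scott_sentence_within (\<lambda>M. True) C \<phi>) \<and>
            (\<forall>Xo S. dce_in Xo S \<longrightarrow>
               (\<exists>Cs :: nat \<Rightarrow> nat monoid. unif_computable_seq Xo Cs \<and>
                  (\<forall>n. abelian_p_group p (Cs n) \<and> has_length p (Cs n) N) \<and>
                  (\<forall>n. Cs n \<cong> C \<longleftrightarrow> n \<in> S))))"
proof -
  have gC: "group C" using assms(2) by (simp add: abelian_p_group_def comm_group_def)
  then have "L_structure C"
    by (auto simp: L_structure_def intro: monoid.m_closed[OF group.is_monoid] monoid.one_closed[OF group.is_monoid])
  then show ?thesis
    using universal_scott_sentence_cyclic[OF assms] pi01_abelian_p_group_seq[OF assms(2-5)]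
      dce_scott_sentence_finite[OF _ assms(3)] dce_abelian_p_group_seq[OF assms]
    by blast
qed

end
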